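(* Let $K$ be a field of characteristic zero and let $A_1 = K\langle X, Y \mid YX - XY = 1\rangle$ be the first Weyl algebra over $K$. Let $P, Q \in A_1$ with $m(P) \leq 2$ and $m(Q) \leq 2$. If $PQ - QP = 1$, then there exists a $K$-algebra automorphism $\tau$ of $A_1$ such that $P = \tau(Y)$ and $Q = \tau(X)$.
   Context: The Weyl algebra $A_1$ is $\mathbb{Z}$-graded, $A_1 = \bigoplus_{i\in\mathbb{Z}} A_{1,i}$ with $A_{1,i}A_{1,j}\subseteq A_{1,i+j}$, where, writing $H = YX$, one has $A_{1,0} = K[H]$ and, for $i \geq 1$, $A_{1,i} = K[H]X^i$ and $A_{1,-i} = K[H]Y^i$. For a nonzero element $a \in A_1$, its mass $m(a)$ is the number of nonzero homogeneous components of $a$ with respect to this grading. *)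

theory Defs
  imports "HOL-Computational_Algebra.Polynomial"
begin

text \<open>An element is written uniquely as  sum_j p_j(X) Y^j  with p_j in K[X]
(X to the left of Y); we store it as the polynomial in Y with coefficients in K[X],
i.e. as a value of type  'a poly poly  (coeff (coeff P j) i is the coefficient of X^i Y^j).
Addition and K-scalar multiplication are those of 'a poly poly; the (non-commutative)
product is given by the normal-ordering rule coming from YX - XY = 1:
  (p Y^b)(q Y^d) = sum_k (b choose k) p q^(k) Y^(b+d-k),
where q^(k) is the k-th formal derivative of q.\<close>

definition weyl_mult :: "'a::field_char_0 poly poly \<Rightarrow> 'a poly poly \<Rightarrow> 'a poly poly" where
  "weyl_mult P Q =
     (\<Sum>b\<le>degree P. \<Sum>k\<le>b. \<Sum>d\<le>degree Q.
        monom (smult (of_nat (b choose k)) (coeff P b * (pderiv ^^ k) (coeff Q d))) (b + d - k))"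

definition weyl_X :: "'a::field_char_0 poly poly" where
  "weyl_X = monom [:0, 1:] 0"

definition weyl_Y :: "'a::field_char_0 poly poly" where
  "weyl_Y = monom 1 1"

definition weyl_aut :: "('a::field_char_0 poly poly \<Rightarrow> 'a poly poly) \<Rightarrow> bool" where
  "weyl_aut \<tau> \<longleftrightarrow> bij \<tau>
     \<and> (\<forall>P Q. \<tau> (P + Q) = \<tau> P + \<tau> Q)
     \<and> (\<forall>c P. \<tau> (smult [:c:] P) = smult [:c:] (\<tau> P))
     \<and> (\<forall>P Q. \<tau> (weyl_mult P Q) = weyl_mult (\<tau> P) (\<tau> Q))
     \<and> \<tau> 1 = 1"

text \<open>Mass: number of nonzero homogeneous components for the Z-grading with
deg X = 1, deg Y = -1; the monomial X^i Y^j is homogeneous of degree i - j.\<close>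
definition weyl_mass :: "'a::field_char_0 poly poly \<Rightarrow> nat" where
  "weyl_mass P = card {int i - int j | i j. coeff (coeff P j) i \<noteq> 0}"

end

theory Submission
  imports Defs
begin

text \<open>Write
  \<open>P = P\<^sub>1 + P\<^sub>2\<close> and \<open>Q = Q\<^sub>1 + Q\<^sub>2\<close> with homogeneous components of degrees \<open>p\<^sub>1 > p\<^sub>2\<close> and
  \<open>q\<^sub>1 > q\<^sub>2\<close>.  Splitting \<open>[P, Q] = 1\<close> into homogeneous components, \<open>[P\<^sub>1, Q\<^sub>1]\<close> and
  \<open>[P\<^sub>2, Q\<^sub>2]\<close> are the extreme ones and some \<open>p\<^sub>i + q\<^sub>j\<close> vanishes.  The Y-leading term of a
  commutator of homogeneous elements is a Poisson bracket; it shows that homogeneous solutions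
  of \<open>[u, v] = 1\<close> are \<open>(cY, c\<^sup>-\<^sup>1X)\<close> or \<open>(cX, -c\<^sup>-\<^sup>1Y)\<close>, and it pins down the remaining
  components.  In every case the pair becomes triangular, \<open>(cY + f(X), c\<^sup>-\<^sup>1X + g(Y))\<close> up to
  the symmetry \<open>(P, Q) \<mapsto> (Q, -P)\<close>, or linear in \<open>X\<close> and \<open>Y\<close>.  For such pairs \<open>X\<close> and \<open>Y\<close>
  lie in the subalgebra generated by \<open>P\<close> and \<open>Q\<close>, so the substitution \<open>X \<mapsto> Q, Y \<mapsto> P\<close>,
  always an injective endomorphism, is an automorphism.\<close>

section \<open>The Weyl algebra acting on polynomials\<close>

lemma smult_sum_right: "smult c (sum f S) = (\<Sum>i\<in>S. smult c (f i))"
  by (induction S rule: infinite_finite_induct) (simp_all add: smult_add_right)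

lemma pderiv_sum: "pderiv (sum f A) = (\<Sum>x\<in>A. pderiv (f x))"
  using higher_pderiv_sum[of 1 f A] by simp

lemma higher_pderiv_mult:
  fixes p q :: "'a::{comm_semiring_1,semiring_no_zero_divisors} poly"
  shows "(pderiv ^^ n) (p * q) =
    (\<Sum>k\<le>n. smult (of_nat (n choose k)) ((pderiv ^^ k) p * (pderiv ^^ (n - k)) q))"
proof (induction n)
  case 0
  then show ?case by simp
next
  case (Suc n)
  let ?t = "\<lambda>k. (pderiv ^^ k) p * (pderiv ^^ (Suc n - k)) q"
  have "(pderiv ^^ Suc n) (p * q) =
      (\<Sum>k\<le>n. smult (of_nat (n choose k)) ((pderiv ^^ Suc k) p * (pderiv ^^ (n - k)) q))
    + (\<Sum>k\<le>n. smult (of_nat (n choose k)) ((pderiv ^^ k) p * (pderiv ^^ Suc (n - k)) q))"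
    unfolding funpow.simps comp_apply Suc pderiv_sum
    by (simp add: pderiv_smult pderiv_mult algebra_simps sum.distrib smult_add_right)
  also have "(\<Sum>k\<le>n. smult (of_nat (n choose k)) ((pderiv ^^ Suc k) p * (pderiv ^^ (n - k)) q))
      = (\<Sum>k\<le>Suc n. smult (of_nat (n choose (k - 1))) (if k = 0 then 0 else ?t k))"
    by (subst sum.atMost_Suc_shift) (simp del: funpow.simps)
  also have "(\<Sum>k\<le>n. smult (of_nat (n choose k)) ((pderiv ^^ k) p * (pderiv ^^ Suc (n - k)) q))
      = (\<Sum>k\<le>Suc n. smult (of_nat (n choose k)) (?t k))"
    by (simp del: funpow.simps add: Suc_diff_le binomial_eq_0)
  also have "(\<Sum>k\<le>Suc n. smult (of_nat (n choose (k - 1))) (if k = 0 then 0 else ?t k))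
      + (\<Sum>k\<le>Suc n. smult (of_nat (n choose k)) (?t k))
      = (\<Sum>k\<le>Suc n. smult (of_nat (Suc n choose k)) (?t k))"
    unfolding sum.distrib[symmetric]
    by (intro sum.cong refl)
      (auto simp: smult_add_left[symmetric] gr0_conv_Suc simp del: funpow.simps)
  finally show ?case .
qed

lemma higher_pderiv_gt_degree:
  fixes f :: "'a::{comm_semiring_1,semiring_no_zero_divisors} poly"
  assumes "degree f < j"
  shows "(pderiv ^^ j) f = 0"
  by (rule poly_eqI) (use assms in \<open>simp add: coeff_higher_pderiv coeff_eq_0\<close>)

lemma higher_pderiv_degree:
  fixes p :: "'a::{comm_semiring_1,semiring_no_zero_divisors,semiring_char_0} poly"
  shows "(pderiv ^^ degree p) p = [:fact (degree p) * lead_coeff p:]"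
proof (rule poly_eqI)
  fix n
  show "coeff ((pderiv ^^ degree p) p) n = coeff [:fact (degree p) * lead_coeff p:] n"
    by (cases n) (simp_all add: coeff_higher_pderiv pochhammer_fact coeff_eq_0)
qed

text \<open>An element  \<open>\<Sum>\<^sub>j p\<^sub>j(X) Y\<^sup>j\<close>  of \<open>A\<^sub>1\<close> acts on \<open>K[x]\<close> as the differential
  operator  \<open>f \<mapsto> \<Sum>\<^sub>j p\<^sub>j f\<^sup>(\<^sup>j\<^sup>)\<close>.  This representation is faithful and turns
  \<^const>\<open>weyl_mult\<close> into composition, which yields the ring laws.\<close>

definition weyl_act :: "'a::field_char_0 poly poly \<Rightarrow> 'a poly \<Rightarrow> 'a poly" where
  "weyl_act A f = (\<Sum>j\<le>degree A. coeff A j * (pderiv ^^ j) f)"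

lemma weyl_act_conv_sum:
  assumes "degree A \<le> n"
  shows "weyl_act A f = (\<Sum>j\<le>n. coeff A j * (pderiv ^^ j) f)"
  unfolding weyl_act_def
  by (rule sum.mono_neutral_left) (use assms in \<open>auto simp: coeff_eq_0\<close>)

lemma weyl_act_add_left: "weyl_act (A + B) f = weyl_act A f + weyl_act B f"
proof -
  let ?n = "max (degree A) (max (degree B) (degree (A + B)))"
  show ?thesis
    by (subst (1 2 3) weyl_act_conv_sum[of _ ?n]) (auto simp: sum.distrib algebra_simps)
qed

lemma weyl_act_0_left [simp]: "weyl_act 0 f = 0"
  by (simp add: weyl_act_def)

lemma weyl_act_diff_left: "weyl_act (A - B) f = weyl_act A f - weyl_act B f"
  using weyl_act_add_left[of "A - B" B f] by simp

lemma weyl_act_sum_left: "weyl_act (sum F S) f = (\<Sum>x\<in>S. weyl_act (F x) f)"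
  by (induction S rule: infinite_finite_induct) (simp_all add: weyl_act_add_left)

lemma weyl_act_smult_left: "weyl_act (smult c A) f = c * weyl_act A f"
  unfolding weyl_act_def by (auto simp: sum_distrib_left mult_ac degree_smult_eq)

lemma weyl_act_monom [simp]: "weyl_act (monom p j) f = p * (pderiv ^^ j) f"
proof -
  have "weyl_act (monom p j) f = (\<Sum>i\<le>j. coeff (monom p j) i * (pderiv ^^ i) f)"
    by (rule weyl_act_conv_sum) (simp add: degree_monom_le)
  also have "\<dots> = p * (pderiv ^^ j) f"
    by (simp add: coeff_monom if_distrib[of "\<lambda>x. x * _"] cong: if_cong)
  finally show ?thesis .
qed

lemma weyl_act_1_left [simp]: "weyl_act 1 f = f"
  using weyl_act_monom[of 1 0 f] by (simp add: monom_0 one_pCons)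

lemma weyl_act_add_right: "weyl_act A (f + g) = weyl_act A f + weyl_act A g"
  unfolding weyl_act_def by (simp add: higher_pderiv_add sum.distrib algebra_simps)

lemma weyl_act_0_right [simp]: "weyl_act A 0 = 0"
  by (simp add: weyl_act_def)

lemma weyl_act_sum_right: "weyl_act A (sum F S) = (\<Sum>x\<in>S. weyl_act A (F x))"
  by (induction S rule: infinite_finite_induct) (simp_all add: weyl_act_add_right)

lemma weyl_act_smult_right: "weyl_act A (smult c f) = smult c (weyl_act A f)"
  unfolding weyl_act_def by (simp add: higher_pderiv_smult smult_sum_right)

lemma weyl_act_weyl_mult: "weyl_act (weyl_mult A B) f = weyl_act A (weyl_act B f)"
proof -
  have shift: "(pderiv ^^ (b - k)) ((pderiv ^^ d) f) = (pderiv ^^ (b + d - k)) f" if "k \<le> b" for b d k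
  proof -
    have "b + d - k = (b - k) + d" using that by simp
    then show ?thesis by (simp only: funpow_add comp_apply)
  qed
  have "weyl_act (weyl_mult A B) f =
    (\<Sum>b\<le>degree A. \<Sum>k\<le>b. \<Sum>d\<le>degree B.
        smult (of_nat (b choose k)) (coeff A b * (pderiv ^^ k) (coeff B d) * (pderiv ^^ (b + d - k)) f))"
    unfolding weyl_mult_def weyl_act_sum_left by simp
  also have "\<dots> = (\<Sum>b\<le>degree A. \<Sum>d\<le>degree B. \<Sum>k\<le>b.
        coeff A b * smult (of_nat (b choose k))
          ((pderiv ^^ k) (coeff B d) * (pderiv ^^ (b - k)) ((pderiv ^^ d) f)))"
  proof (rule sum.cong[OF refl])
    fix b
    show "(\<Sum>k\<le>b. \<Sum>d\<le>degree B. smult (of_nat (b choose k))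
            (coeff A b * (pderiv ^^ k) (coeff B d) * (pderiv ^^ (b + d - k)) f))
      = (\<Sum>d\<le>degree B. \<Sum>k\<le>b. coeff A b * smult (of_nat (b choose k))
            ((pderiv ^^ k) (coeff B d) * (pderiv ^^ (b - k)) ((pderiv ^^ d) f)))"
      by (subst sum.swap) (auto intro!: sum.cong simp: shift mult_ac)
  qed
  also have "\<dots> = weyl_act A (weyl_act B f)"
    unfolding weyl_act_def[of A] weyl_act_def[of B]
    by (simp add: higher_pderiv_sum higher_pderiv_mult sum_distrib_left del: funpow.simps)
  finally show ?thesis .
qed

lemma weyl_act_inject:
  assumes "\<And>f. weyl_act A f = weyl_act B f"
  shows "A = B"
proof (rule ccontr)
  define C where "C = A - B"
  assume "A \<noteq> B"
  then have "C \<noteq> 0" by (simp add: C_def)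
  then have ex: "\<exists>j. coeff C j \<noteq> 0" by (metis leading_coeff_0_iff)
  define j0 where "j0 = (LEAST j. coeff C j \<noteq> 0)"
  have c0: "coeff C j0 \<noteq> 0" unfolding j0_def by (rule LeastI_ex[OF ex])
  have below: "coeff C j = 0" if "j < j0" for j using that not_less_Least unfolding j0_def by blast
  \<comment> \<open>the lowest-order term of \<open>C\<close> is detected by the monomial \<open>x\<^sup>j\<^sup>0\<close>\<close>
  have "weyl_act C (monom 1 j0) = (\<Sum>j\<in>{j0}. coeff C j * (pderiv ^^ j) (monom 1 j0))"
    unfolding weyl_act_def
  proof (rule sum.mono_neutral_right)
    show "\<forall>i\<in>{..degree C} - {j0}. coeff C i * (pderiv ^^ i) (monom 1 j0) = 0"
      using below higher_pderiv_gt_degree[of "monom (1::'a) j0"]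
      by (auto simp: degree_monom_eq nat_neq_iff)
  qed (use c0 le_degree in auto)
  also have "\<dots> = coeff C j0 * [:fact j0:]"
    using higher_pderiv_degree[of "monom (1::'a) j0"] by (simp add: degree_monom_eq)
  finally have "coeff C j0 * [:fact j0:] = 0"
    using assms by (simp add: C_def weyl_act_diff_left)
  then show False using c0 by simp
qed

lemma weyl_mult_assoc: "weyl_mult (weyl_mult A B) C = weyl_mult A (weyl_mult B C)"
  by (rule weyl_act_inject) (simp add: weyl_act_weyl_mult)

lemma weyl_mult_add_left: "weyl_mult (A + B) C = weyl_mult A C + weyl_mult B C"
  by (rule weyl_act_inject) (simp add: weyl_act_weyl_mult weyl_act_add_left)

lemma weyl_mult_add_right: "weyl_mult A (B + C) = weyl_mult A B + weyl_mult A C"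
  by (rule weyl_act_inject) (simp add: weyl_act_weyl_mult weyl_act_add_left weyl_act_add_right)

lemma weyl_mult_1_left [simp]: "weyl_mult 1 A = A"
  by (rule weyl_act_inject) (simp add: weyl_act_weyl_mult)

lemma weyl_mult_1_right [simp]: "weyl_mult A 1 = A"
  by (rule weyl_act_inject) (simp add: weyl_act_weyl_mult)

lemma weyl_mult_0_left [simp]: "weyl_mult 0 A = 0"
  by (rule weyl_act_inject) (simp add: weyl_act_weyl_mult)

lemma weyl_mult_0_right [simp]: "weyl_mult A 0 = 0"
  by (rule weyl_act_inject) (simp add: weyl_act_weyl_mult)

lemma weyl_mult_smult_left: "weyl_mult (smult c A) B = smult c (weyl_mult A B)"
  by (rule weyl_act_inject) (simp add: weyl_act_weyl_mult weyl_act_smult_left)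

lemma weyl_mult_smult_right: "weyl_mult A (smult [:c:] B) = smult [:c:] (weyl_mult A B)"
  by (rule weyl_act_inject) (simp add: weyl_act_weyl_mult weyl_act_smult_left weyl_act_smult_right)

text \<open>For \<open>A = \<Sum>\<^sub>j p\<^sub>j(X) Y\<^sup>j\<close>, \<^term>\<open>pderiv A\<close> is \<open>\<partial>A/\<partial>Y\<close> and \<open>xderiv A\<close> is \<open>\<partial>A/\<partial>X\<close>.\<close>

abbreviation xderiv :: "'a::field_char_0 poly poly \<Rightarrow> 'a poly poly" where
  "xderiv A \<equiv> map_poly pderiv A"

lemma coeff_xderiv [simp]: "coeff (xderiv A) j = pderiv (coeff A j)"
  by (simp add: coeff_map_poly)

lemma degree_xderiv_le: "degree (xderiv A) \<le> degree A"
  by (rule degree_le) (simp add: coeff_eq_0)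

lemma higher_pderiv_mult_x:
  fixes f :: "'a::field_char_0 poly"
  shows "(pderiv ^^ j) ([:0,1:] * f) = [:0,1:] * (pderiv ^^ j) f + of_nat j * (pderiv ^^ (j - 1)) f"
proof (induction j)
  case 0
  then show ?case by simp
next
  case (Suc j)
  then show ?case
    by (cases j) (simp_all add: pderiv_add pderiv_mult pderiv_pCons algebra_simps)
qed

lemma weyl_act_pderiv:
  "weyl_act (pderiv A) f = (\<Sum>j\<le>degree A. coeff A j * (of_nat j * (pderiv ^^ (j - 1)) f))"
proof -
  have "weyl_act (pderiv A) f = (\<Sum>j\<le>degree A. coeff (pderiv A) j * (pderiv ^^ j) f)"
    by (rule weyl_act_conv_sum) (simp add: degree_pderiv)
  also have "\<dots> = (\<Sum>j\<le>Suc (degree A). coeff A j * (of_nat j * (pderiv ^^ (j - 1)) f))"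
    by (subst sum.atMost_Suc_shift) (simp add: coeff_pderiv mult_ac)
  also have "\<dots> = (\<Sum>j\<le>degree A. coeff A j * (of_nat j * (pderiv ^^ (j - 1)) f))"
    by (simp add: coeff_eq_0)
  finally show ?thesis .
qed

lemma weyl_act_pCons_0: "weyl_act (pCons 0 A) f = weyl_act A (pderiv f)"
proof -
  have "weyl_act (pCons 0 A) f = (\<Sum>j\<le>Suc (degree A). coeff (pCons 0 A) j * (pderiv ^^ j) f)"
    by (rule weyl_act_conv_sum) (simp add: degree_pCons_le)
  also have "\<dots> = (\<Sum>j\<le>degree A. coeff A j * (pderiv ^^ j) (pderiv f))"
    by (subst sum.atMost_Suc_shift) (simp add: funpow_Suc_right del: funpow.simps)
  finally show ?thesis by (simp add: weyl_act_def)
qed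

lemma weyl_mult_X_left [simp]: "weyl_mult weyl_X A = smult [:0,1:] A"
  by (rule weyl_act_inject) (simp add: weyl_act_weyl_mult weyl_act_smult_left weyl_X_def)

lemma weyl_mult_X_right [simp]: "weyl_mult A weyl_X = smult [:0,1:] A + pderiv A"
proof (rule weyl_act_inject)
  fix f
  have "weyl_act (weyl_mult A weyl_X) f = weyl_act A ([:0,1:] * f)"
    by (simp add: weyl_act_weyl_mult weyl_X_def)
  also have "\<dots> = (\<Sum>j\<le>degree A. coeff A j *
      ([:0,1:] * (pderiv ^^ j) f + of_nat j * (pderiv ^^ (j - 1)) f))"
    unfolding weyl_act_def higher_pderiv_mult_x ..
  also have "\<dots> = [:0,1:] * weyl_act A f + weyl_act (pderiv A) f"
    unfolding weyl_act_pderiv by (simp add: weyl_act_def algebra_simps sum.distrib sum_distrib_left)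
  finally show "weyl_act (weyl_mult A weyl_X) f = weyl_act (smult [:0,1:] A + pderiv A) f"
    by (simp add: weyl_act_add_left weyl_act_smult_left)
qed

lemma weyl_mult_Y_right [simp]: "weyl_mult A weyl_Y = pCons 0 A"
  by (rule weyl_act_inject) (simp add: weyl_act_weyl_mult weyl_act_pCons_0 weyl_Y_def)

lemma weyl_mult_Y_left [simp]: "weyl_mult weyl_Y A = pCons 0 A + xderiv A"
proof (rule weyl_act_inject)
  fix f
  have "weyl_act (weyl_mult weyl_Y A) f = pderiv (weyl_act A f)"
    by (simp add: weyl_act_weyl_mult weyl_Y_def)
  also have "\<dots> = (\<Sum>j\<le>degree A. coeff A j * (pderiv ^^ j) (pderiv f))
      + (\<Sum>j\<le>degree A. pderiv (coeff A j) * (pderiv ^^ j) f)"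
    unfolding weyl_act_def pderiv_sum
    by (simp add: pderiv_mult sum.distrib funpow_swap1 mult_ac del: funpow.simps)
  also have "\<dots> = weyl_act (pCons 0 A) f + weyl_act (xderiv A) f"
    by (simp add: weyl_act_pCons_0 weyl_act_def[of A] weyl_act_conv_sum[OF degree_xderiv_le])
  finally show "weyl_act (weyl_mult weyl_Y A) f = weyl_act (pCons 0 A + xderiv A) f"
    by (simp only: weyl_act_add_left)
qed

lemma weyl_mult_const_left [simp]: "weyl_mult [:[:c:]:] A = smult [:c:] A"
  using weyl_mult_smult_left[of "[:c:]" 1 A] by simp

lemma weyl_mult_const_right [simp]: "weyl_mult A [:[:c:]:] = smult [:c:] A"
  using weyl_mult_smult_right[of A c 1] by simp

definition weyl_comm :: "'a::field_char_0 poly poly \<Rightarrow> 'a poly poly \<Rightarrow> 'a poly poly" where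
  "weyl_comm A B = weyl_mult A B - weyl_mult B A"

lemma weyl_comm_X: "weyl_comm A weyl_X = pderiv A"
  by (simp add: weyl_comm_def weyl_mult_X_right weyl_mult_X_left)

lemma weyl_comm_Y: "weyl_comm weyl_Y A = xderiv A"
  by (simp add: weyl_comm_def weyl_mult_Y_right weyl_mult_Y_left)

typedef (overloaded) 'a weyl = "UNIV :: 'a::field_char_0 poly poly set"
  by simp

instantiation weyl :: (field_char_0) ring_1
begin

definition "0 = Abs_weyl 0"
definition "1 = Abs_weyl 1"
definition "a + b = Abs_weyl (Rep_weyl a + Rep_weyl b)"
definition "a - b = Abs_weyl (Rep_weyl a - Rep_weyl b)"
definition "- a = Abs_weyl (- Rep_weyl a)"
definition "a * b = Abs_weyl (weyl_mult (Rep_weyl a) (Rep_weyl b))"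

instance
  by standard
    (simp_all add: zero_weyl_def one_weyl_def plus_weyl_def minus_weyl_def uminus_weyl_def
      times_weyl_def Abs_weyl_inverse Rep_weyl_inverse Abs_weyl_inject
      weyl_mult_assoc weyl_mult_add_left weyl_mult_add_right algebra_simps)

end

lemma Rep_weyl_Abs_weyl [simp]: "Rep_weyl (Abs_weyl A) = A"
  by (simp add: Abs_weyl_inverse)

lemma Rep_weyl_simps [simp]:
  "Rep_weyl (a + b) = Rep_weyl a + Rep_weyl b"
  "Rep_weyl (a - b) = Rep_weyl a - Rep_weyl b"
  "Rep_weyl (- a) = - Rep_weyl a"
  "Rep_weyl (a * b) = weyl_mult (Rep_weyl a) (Rep_weyl b)"
  "Rep_weyl 0 = 0"
  "Rep_weyl 1 = 1"
  by (simp_all add: zero_weyl_def one_weyl_def plus_weyl_def minus_weyl_def uminus_weyl_def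
      times_weyl_def)

lemma weyl_eqI: "Rep_weyl a = Rep_weyl b \<Longrightarrow> a = b"
  by (simp add: Rep_weyl_inject)

lemma Abs_weyl_simps:
  "Abs_weyl (A + B) = Abs_weyl A + Abs_weyl B"
  "Abs_weyl (A - B) = Abs_weyl A - Abs_weyl B"
  "Abs_weyl (weyl_mult A B) = Abs_weyl A * Abs_weyl B"
  "Abs_weyl 0 = 0"
  "Abs_weyl 1 = 1"
  by (simp_all add: weyl_eqI)

lemma weyl_comm_eq_1_iff: "weyl_comm A B = 1 \<longleftrightarrow> Abs_weyl A * Abs_weyl B - Abs_weyl B * Abs_weyl A = 1"
  by (auto simp: weyl_comm_def Abs_weyl_inject simp flip: Abs_weyl_simps)

definition weyl_const :: "'a::field_char_0 \<Rightarrow> 'a weyl" where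
  "weyl_const c = Abs_weyl [:[:c:]:]"

definition gen_X :: "'a::field_char_0 weyl" where
  "gen_X = Abs_weyl weyl_X"

definition gen_Y :: "'a::field_char_0 weyl" where
  "gen_Y = Abs_weyl weyl_Y"

lemma Rep_weyl_const [simp]: "Rep_weyl (weyl_const c) = [:[:c:]:]"
  by (simp add: weyl_const_def)

lemma Rep_gen_X [simp]: "Rep_weyl gen_X = weyl_X"
  by (simp add: gen_X_def)

lemma Rep_gen_Y [simp]: "Rep_weyl gen_Y = weyl_Y"
  by (simp add: gen_Y_def)

lemma weyl_const_commute: "a * weyl_const c = weyl_const c * a"
  by (rule weyl_eqI) simp

lemma weyl_const_commute_left: "a * (weyl_const c * b) = weyl_const c * (a * b)"
  by (metis mult.assoc weyl_const_commute)

lemma weyl_const_0 [simp]: "weyl_const 0 = 0"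
  by (rule weyl_eqI) simp

lemma weyl_const_1 [simp]: "weyl_const 1 = 1"
  by (rule weyl_eqI) (simp add: one_pCons)

lemma weyl_const_eq_0_iff [simp]: "weyl_const c = 0 \<longleftrightarrow> c = 0"
  by (metis Rep_weyl_const Rep_weyl_simps(5) pCons_eq_0_iff weyl_const_0)

lemma weyl_const_add: "weyl_const (c + d) = weyl_const c + weyl_const d"
  by (rule weyl_eqI) simp

lemma weyl_const_mult: "weyl_const (c * d) = weyl_const c * weyl_const d"
  by (rule weyl_eqI) simp

lemma weyl_const_inverse_cancel:
  "c \<noteq> 0 \<Longrightarrow> weyl_const (inverse c) * (weyl_const c * a) = a"
  "c \<noteq> 0 \<Longrightarrow> weyl_const c * (weyl_const (inverse c) * a) = a"
  by (simp_all add: mult.assoc[symmetric] weyl_const_mult[symmetric])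

lemma Abs_weyl_const_X: "Abs_weyl [:[:0, c:]:] = weyl_const c * gen_X"
  by (rule weyl_eqI) (simp add: weyl_X_def monom_0)

lemma Abs_weyl_const_Y: "Abs_weyl (monom [:c:] 1) = weyl_const c * gen_Y"
  by (rule weyl_eqI) (simp add: weyl_Y_def smult_monom)

lemma Abs_weyl_smult: "Abs_weyl (smult [:c:] A) = weyl_const c * Abs_weyl A"
  by (rule weyl_eqI) simp

lemma Abs_weyl_pCons_const: "Abs_weyl [:pCons c p:] = weyl_const c + gen_X * Abs_weyl [:p:]"
  by (rule weyl_eqI) simp

lemma Abs_weyl_pCons: "Abs_weyl (pCons p A) = Abs_weyl [:p:] + Abs_weyl A * gen_Y"
  by (rule weyl_eqI) simp

section \<open>Normal ordering and leading terms of commutators\<close>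

lemma higher_pderiv_monom_binomial:
  "(pderiv ^^ k) (monom (p::'a::{comm_semiring_1,semiring_no_zero_divisors}) b) =
    monom (of_nat ((b choose k) * fact k) * p) (b - k)"
proof (induction k)
  case 0
  then show ?case by simp
next
  case (Suc k)
  have h: "Suc k * (b choose Suc k) = (b - k) * (b choose k)"
    using binomial_absorption[of k b] binomial_absorb_comp[of b k] by simp
  have nat: "(b choose Suc k) * fact (Suc k) = (b - k) * ((b choose k) * fact k)"
  proof -
    have "(b choose Suc k) * fact (Suc k) = (Suc k * (b choose Suc k)) * fact k"
      unfolding fact_Suc of_nat_id by (simp only: mult_ac)
    also have "\<dots> = (b - k) * ((b choose k) * fact k)" unfolding h by (simp only: mult_ac)
    finally show ?thesis .
  qed
  have "(pderiv ^^ Suc k) (monom p b) =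
      monom (of_nat (b - k) * (of_nat ((b choose k) * fact k) * p)) (b - k - 1)"
    using Suc by (simp add: pderiv_monom)
  also have "\<dots> = monom (of_nat ((b choose Suc k) * fact (Suc k)) * p) (b - Suc k)"
    by (simp only: nat of_nat_mult mult.assoc) simp
  finally show ?case .
qed

lemma weyl_mult_monom_monom:
  "weyl_mult (monom p b) (monom q d) =
    (\<Sum>k\<le>b. monom (smult (of_nat (b choose k)) (p * (pderiv ^^ k) q)) (b + d - k))"
proof (rule weyl_act_inject)
  fix f :: "'a poly"
  have shift: "(pderiv ^^ (b - k)) ((pderiv ^^ d) f) = (pderiv ^^ (b + d - k)) f" if "k \<le> b" for k
  proof -
    have "b + d - k = (b - k) + d" using that by simp
    then show ?thesis by (simp only: funpow_add comp_apply)
  qed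
  have "weyl_act (weyl_mult (monom p b) (monom q d)) f =
      (\<Sum>k\<le>b. p * smult (of_nat (b choose k)) ((pderiv ^^ k) q * (pderiv ^^ (b - k)) ((pderiv ^^ d) f)))"
    by (simp add: weyl_act_weyl_mult higher_pderiv_mult sum_distrib_left)
  also have "\<dots> = (\<Sum>k\<le>b. smult (of_nat (b choose k)) (p * (pderiv ^^ k) q) * (pderiv ^^ (b + d - k)) f)"
    by (rule sum.cong) (simp_all add: shift mult_ac)
  finally show "weyl_act (weyl_mult (monom p b) (monom q d)) f =
      weyl_act (\<Sum>k\<le>b. monom (smult (of_nat (b choose k)) (p * (pderiv ^^ k) q)) (b + d - k)) f"
    by (simp add: weyl_act_sum_left)
qed

lemma higher_xderiv_monom: "(xderiv ^^ k) (monom q d) = monom ((pderiv ^^ k) q) d"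
  by (induction k) (simp_all add: map_poly_monom)

lemma xderiv_add: "xderiv (A + B) = xderiv A + xderiv B"
  by (rule poly_eqI) (simp add: pderiv_add)

lemma higher_xderiv_add: "(xderiv ^^ k) (A + B) = (xderiv ^^ k) A + (xderiv ^^ k) B"
  by (induction k) (simp_all add: xderiv_add)

lemma higher_xderiv_sum: "(xderiv ^^ k) (sum F S) = (\<Sum>x\<in>S. (xderiv ^^ k) (F x))"
proof (induction S rule: infinite_finite_induct)
  case (empty)
  show ?case by (induction k) simp_all
qed (simp_all add: higher_xderiv_add, induction k, simp_all)

text \<open>The normal-ordering formula  \<open>A B = \<Sum>\<^sub>k (1/k!) (\<partial>\<^sub>Y\<^sup>k A) (\<partial>\<^sub>X\<^sup>k B)\<close>,  with
  commutative products on the right; any \<open>N \<ge> degree A\<close> truncates it exactly.\<close>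

definition weyl_mult_series :: "nat \<Rightarrow> 'a::field_char_0 poly poly \<Rightarrow> 'a poly poly \<Rightarrow> 'a poly poly" where
  "weyl_mult_series N A B =
    (\<Sum>k\<le>N. smult [:inverse (fact k):] ((pderiv ^^ k) A * (xderiv ^^ k) B))"

lemma weyl_mult_series_monom:
  assumes "b \<le> N"
  shows "weyl_mult_series N (monom p b) (monom q d) = weyl_mult (monom p b) (monom q d)"
proof -
  have "weyl_mult_series N (monom p b) (monom q d) =
      (\<Sum>k\<le>N. monom (smult (of_nat (b choose k)) (p * (pderiv ^^ k) q)) (b + d - k))"
    unfolding weyl_mult_series_def
  proof (rule sum.cong[OF refl])
    fix k
    show "smult [:inverse (fact k):] ((pderiv ^^ k) (monom p b) * (xderiv ^^ k) (monom q d)) =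
      monom (smult (of_nat (b choose k)) (p * (pderiv ^^ k) q)) (b + d - k)"
    proof (cases "k \<le> b")
      case True
      then have e: "b - k + d = b + d - k" by simp
      have f: "[:inverse (fact k):] * (of_nat ((b choose k) * fact k) :: 'a poly) = of_nat (b choose k)"
        by (simp add: of_nat_poly)
      show ?thesis
        unfolding higher_pderiv_monom_binomial higher_xderiv_monom mult_monom smult_monom e
        by (simp add: f mult.assoc[symmetric] of_nat_poly) (simp add: mult.assoc)
    next
      case False
      then show ?thesis by (simp add: higher_pderiv_monom_binomial binomial_eq_0)
    qed
  qed
  also have "\<dots> = (\<Sum>k\<le>b. monom (smult (of_nat (b choose k)) (p * (pderiv ^^ k) q)) (b + d - k))"
    by (rule sum.mono_neutral_right) (use assms in \<open>auto simp: binomial_eq_0\<close>)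
  finally show ?thesis by (simp add: weyl_mult_monom_monom)
qed

lemma weyl_mult_series_sum_left:
  "weyl_mult_series N (sum F S) B = (\<Sum>x\<in>S. weyl_mult_series N (F x) B)"
  unfolding weyl_mult_series_def higher_pderiv_sum sum_distrib_right smult_sum_right
  by (rule sum.swap)

lemma weyl_mult_series_sum_right:
  "weyl_mult_series N A (sum F S) = (\<Sum>x\<in>S. weyl_mult_series N A (F x))"
  unfolding weyl_mult_series_def higher_xderiv_sum sum_distrib_left smult_sum_right
  by (rule sum.swap)

lemma weyl_mult_sum_left: "weyl_mult (sum F S) B = (\<Sum>x\<in>S. weyl_mult (F x) B)"
  by (induction S rule: infinite_finite_induct) (simp_all add: weyl_mult_add_left)

lemma weyl_mult_sum_right: "weyl_mult A (sum F S) = (\<Sum>x\<in>S. weyl_mult A (F x))"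
  by (induction S rule: infinite_finite_induct) (simp_all add: weyl_mult_add_right)

lemma weyl_mult_eq_series:
  assumes "degree A \<le> N"
  shows "weyl_mult A B = weyl_mult_series N A B"
proof -
  let ?a = "\<lambda>b. monom (coeff A b) b" and ?b = "\<lambda>d. monom (coeff B d) d"
  have "weyl_mult A B = (\<Sum>b\<le>degree A. \<Sum>d\<le>degree B. weyl_mult (?a b) (?b d))"
    by (subst (1) poly_as_sum_of_monoms[symmetric], subst (1) poly_as_sum_of_monoms[symmetric, of B])
       (simp only: weyl_mult_sum_left weyl_mult_sum_right, rule sum.swap)
  also have "\<dots> = (\<Sum>b\<le>degree A. \<Sum>d\<le>degree B. weyl_mult_series N (?a b) (?b d))"
    using assms by (intro sum.cong refl) (simp add: weyl_mult_series_monom)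
  also have "\<dots> = weyl_mult_series N (\<Sum>b\<le>degree A. ?a b) (\<Sum>d\<le>degree B. ?b d)"
    by (simp only: weyl_mult_series_sum_left weyl_mult_series_sum_right, rule sum.swap)
  finally show ?thesis by (simp only: poly_as_sum_of_monoms)
qed

lemma weyl_comm_add_left: "weyl_comm (A + B) C = weyl_comm A C + weyl_comm B C"
  by (simp add: weyl_comm_def weyl_mult_add_left weyl_mult_add_right)

lemma weyl_comm_add_right: "weyl_comm A (B + C) = weyl_comm A B + weyl_comm A C"
  by (simp add: weyl_comm_def weyl_mult_add_left weyl_mult_add_right)

lemma weyl_comm_smult_left: "weyl_comm (smult [:c:] A) B = smult [:c:] (weyl_comm A B)"
  by (simp add: weyl_comm_def weyl_mult_smult_left weyl_mult_smult_right smult_diff_right)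

lemma weyl_comm_smult_right: "weyl_comm A (smult [:c:] B) = smult [:c:] (weyl_comm A B)"
  by (simp add: weyl_comm_def weyl_mult_smult_left weyl_mult_smult_right smult_diff_right)

lemma weyl_comm_swap: "weyl_comm B A = - weyl_comm A B"
  by (simp add: weyl_comm_def)

lemma weyl_comm_0 [simp]: "weyl_comm 0 A = 0" "weyl_comm A 0 = 0"
  by (simp_all add: weyl_comm_def)

lemma weyl_comm_self [simp]: "weyl_comm A A = 0"
  by (simp add: weyl_comm_def)

lemma weyl_comm_diff_right: "weyl_comm A (B - C) = weyl_comm A B - weyl_comm A C"
  using weyl_comm_add_right[of A "B - C" C] by simp

lemma weyl_comm_uminus_right: "weyl_comm A (- B) = - weyl_comm A B"
  using weyl_comm_add_right[of A B "- B"] by (simp add: add_eq_0_iff)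

lemma weyl_comm_left_cY: "weyl_comm (monom [:c:] 1) B = smult [:c:] (xderiv B)"
proof -
  have "monom [:c:] 1 = smult [:c:] weyl_Y" by (simp add: weyl_Y_def smult_monom)
  then show ?thesis by (simp add: weyl_comm_smult_left weyl_comm_Y)
qed

lemma weyl_comm_right_cX: "weyl_comm A [:[:0, c:]:] = smult [:c:] (pderiv A)"
proof -
  have "[:[:0, c:]:] = smult [:c:] weyl_X" by (simp add: weyl_X_def monom_0)
  then show ?thesis by (simp add: weyl_comm_smult_right weyl_comm_X)
qed

lemma weyl_comm_left_cX: "weyl_comm [:[:0, c:]:] B = - smult [:c:] (pderiv B)"
  using weyl_comm_right_cX[of B c] weyl_comm_swap[of "[:[:0, c:]:]" B] by simp

lemma weyl_comm_right_cY: "weyl_comm A (monom [:c:] 1) = - smult [:c:] (xderiv A)"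
  using weyl_comm_left_cY[of c A] weyl_comm_swap[of A "monom [:c:] 1"] by simp

lemma coeff_mult_at_bounds:
  fixes p q :: "'a::comm_semiring_1 poly"
  assumes "degree p \<le> m" "degree q \<le> n"
  shows "coeff (p * q) (m + n) = coeff p m * coeff q n"
proof -
  have "coeff (p * q) (m + n) = (\<Sum>i\<in>{m}. coeff p i * coeff q (m + n - i))"
    unfolding coeff_mult
  proof (rule sum.mono_neutral_right)
    show "\<forall>i\<in>{..m + n} - {m}. coeff p i * coeff q (m + n - i) = 0"
    proof
      fix i assume "i \<in> {..m + n} - {m}"
      then have "i < m \<or> i > m" by auto
      then show "coeff p i * coeff q (m + n - i) = 0"
        using assms by (auto simp: coeff_eq_0)
    qed
  qed auto
  then show ?thesis by simp
qed

text \<open>Only the terms \<open>k \<le> 1\<close> of the series reach Y-degree \<open>degree A + degree B - 1\<close>.\<close>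

lemma coeff_weyl_mult_high:
  assumes "degree A + degree B \<le> n + 1"
  shows "coeff (weyl_mult A B) n = coeff (A * B) n + coeff (pderiv A * xderiv B) n"
proof -
  let ?N = "degree A + 1"
  let ?t = "\<lambda>k. coeff (smult [:inverse (fact k):] ((pderiv ^^ k) A * (xderiv ^^ k) B)) n"
  have "coeff (weyl_mult A B) n = (\<Sum>k\<le>?N. ?t k)"
    by (simp add: weyl_mult_eq_series[of A ?N] weyl_mult_series_def coeff_sum)
  also have "\<dots> = (\<Sum>k\<in>{0,1}. ?t k)"
  proof (rule sum.mono_neutral_right)
    show "\<forall>k\<in>{..?N} - {0, 1}. ?t k = 0"
    proof
      fix k assume k: "k \<in> {..?N} - {0, 1}"
      have "degree ((xderiv ^^ k) B) \<le> degree B"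
        by (induction k) (auto intro: order_trans[OF degree_xderiv_le])
      then have "degree ((pderiv ^^ k) A * (xderiv ^^ k) B) \<le> degree A - k + degree B"
        using degree_mult_le[of "(pderiv ^^ k) A" "(xderiv ^^ k) B"]
        by (simp add: degree_higher_pderiv)
      moreover have "degree A - k + degree B < n \<or> (pderiv ^^ k) A = 0"
        using k assms higher_pderiv_gt_degree[of A k] by (cases "k \<le> degree A") auto
      ultimately show "?t k = 0" by (auto simp: coeff_eq_0)
    qed
  qed auto
  finally show ?thesis by simp
qed

lemma coeff_weyl_comm_high:
  assumes "degree A + degree B \<le> n + 1"
  shows "coeff (weyl_comm A B) n = coeff (pderiv A * xderiv B) n - coeff (pderiv B * xderiv A) n"
  using coeff_weyl_mult_high[of A B n] coeff_weyl_mult_high[of B A n] assms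
  by (simp add: weyl_comm_def mult.commute)

lemma coeff_pderiv_xderiv_top:
  assumes "1 \<le> degree A + degree B"
  shows "coeff (pderiv A * xderiv B) (degree A + degree B - 1) =
    smult (of_nat (degree A)) (lead_coeff A * pderiv (lead_coeff B))"
proof (cases "degree A = 0")
  case True
  then show ?thesis by (simp add: pderiv_eq_0_iff[THEN iffD2])
next
  case False
  then have "coeff (pderiv A * xderiv B) ((degree A - 1) + degree B) =
      coeff (pderiv A) (degree A - 1) * coeff (xderiv B) (degree B)"
    by (intro coeff_mult_at_bounds) (simp_all add: degree_pderiv degree_xderiv_le)
  moreover have "degree A - 1 + degree B = degree A + degree B - 1" using False by simp
  ultimately show ?thesis using False by (simp add: coeff_pderiv of_nat_poly)
qed

lemma coeff_pderiv_xderiv_above: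
  assumes "degree A + degree B \<le> n"
  shows "coeff (pderiv A * xderiv B) n = 0"
proof (cases "degree A = 0")
  case True
  then show ?thesis by (simp add: pderiv_eq_0_iff[THEN iffD2])
next
  case False
  have "degree (pderiv A * xderiv B) \<le> (degree A - 1) + degree B"
    using degree_mult_le[of "pderiv A" "xderiv B"] degree_xderiv_le[of B]
    by (simp add: degree_pderiv)
  then show ?thesis using False assms by (simp add: coeff_eq_0)
qed

text \<open>The Y-leading coefficient of \<open>[A, B]\<close> is the Poisson bracket of the leading terms.\<close>

lemma coeff_weyl_comm_top:
  assumes "1 \<le> degree A + degree B"
  shows "coeff (weyl_comm A B) (degree A + degree B - 1) =
    smult (of_nat (degree A)) (lead_coeff A * pderiv (lead_coeff B))
      - smult (of_nat (degree B)) (lead_coeff B * pderiv (lead_coeff A))"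
  using coeff_weyl_comm_high[of A B "degree A + degree B - 1"] assms
    coeff_pderiv_xderiv_top[of A B] coeff_pderiv_xderiv_top[of B A]
  by (simp add: add.commute)

lemma coeff_weyl_comm_above:
  assumes "degree A + degree B \<le> n"
  shows "coeff (weyl_comm A B) n = 0"
  using coeff_weyl_comm_high[of A B n] assms coeff_pderiv_xderiv_above[of A B n]
    coeff_pderiv_xderiv_above[of B A n]
  by (simp add: add.commute)

lemma weyl_comm_KY_KX_eq_0:
  assumes "xderiv G = 0" and "weyl_comm G [:f:] = 0"
  shows "degree G = 0 \<or> degree f = 0"
proof (rule ccontr)
  assume "\<not> ?thesis"
  then have G: "degree G \<noteq> 0" and f: "pderiv f \<noteq> 0" by (auto simp: pderiv_eq_0_iff)
  have "pderiv (lead_coeff G) = 0" using assms(1) by (metis coeff_xderiv coeff_0)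
  then have "coeff (weyl_comm G [:f:]) (degree G - 1) =
      smult (of_nat (degree G)) (lead_coeff G * pderiv f)"
    using coeff_weyl_comm_top[of G "[:f:]"] G by simp
  moreover have "lead_coeff G \<noteq> 0" using G by auto
  ultimately show False using assms(2) G f by (simp add: of_nat_poly)
qed

section \<open>Substitution homomorphisms and automorphisms\<close>

text \<open>\<open>subst_nf P Q (\<Sum>\<^sub>j p\<^sub>j(X) Y\<^sup>j) = \<Sum>\<^sub>j p\<^sub>j(Q) P\<^sup>j\<close>: substitution of \<open>Q\<close> for \<open>X\<close> and \<open>P\<close> for \<open>Y\<close>
  in the normal form, evaluated by Horner's rule.\<close>

definition weyl_eval :: "'a::field_char_0 weyl \<Rightarrow> 'a poly \<Rightarrow> 'a weyl" where
  "weyl_eval Q p = foldr (\<lambda>a r. weyl_const a + Q * r) (coeffs p) 0"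

definition subst_nf :: "'a::field_char_0 weyl \<Rightarrow> 'a weyl \<Rightarrow> 'a poly poly \<Rightarrow> 'a weyl" where
  "subst_nf P Q A = foldr (\<lambda>p r. weyl_eval Q p + r * P) (coeffs A) 0"

definition weyl_subst :: "'a::field_char_0 weyl \<Rightarrow> 'a weyl \<Rightarrow> 'a weyl \<Rightarrow> 'a weyl" where
  "weyl_subst P Q a = subst_nf P Q (Rep_weyl a)"

lemma weyl_eval_0 [simp]: "weyl_eval Q 0 = 0"
  by (simp add: weyl_eval_def)

lemma weyl_eval_pCons: "weyl_eval Q (pCons a p) = weyl_const a + Q * weyl_eval Q p"
  by (cases "a = 0 \<and> p = 0") (auto simp: weyl_eval_def cCons_def)

lemma weyl_eval_add: "weyl_eval Q (p + q) = weyl_eval Q p + weyl_eval Q q"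
  by (induction p q rule: poly_induct2) (simp_all add: weyl_eval_pCons weyl_const_add algebra_simps)

lemma weyl_eval_smult: "weyl_eval Q (smult c p) = weyl_const c * weyl_eval Q p"
  by (induction p)
    (simp_all add: weyl_eval_pCons weyl_const_mult distrib_left weyl_const_commute_left mult.assoc)

lemma weyl_eval_const [simp]: "weyl_eval Q [:c:] = weyl_const c"
  by (simp add: weyl_eval_pCons)

lemma weyl_eval_pderiv:
  assumes "P * Q - Q * P = 1"
  shows "P * weyl_eval Q p - weyl_eval Q p * P = weyl_eval Q (pderiv p)"
proof (induction p)
  case 0
  then show ?case by simp
next
  case (pCons a p)
  have PQ: "P * Q = Q * P + 1" using assms by (simp add: algebra_simps)
  have "P * weyl_eval Q (pCons a p) - weyl_eval Q (pCons a p) * P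
      = P * Q * weyl_eval Q p - Q * weyl_eval Q p * P"
    by (simp add: weyl_eval_pCons distrib_left distrib_right weyl_const_commute mult.assoc)
  also have "\<dots> = Q * (P * weyl_eval Q p - weyl_eval Q p * P) + weyl_eval Q p"
    by (simp add: PQ algebra_simps)
  finally show ?case
    by (simp add: pCons.IH pderiv_pCons weyl_eval_add weyl_eval_pCons add.commute)
qed

lemma subst_nf_0 [simp]: "subst_nf P Q 0 = 0"
  by (simp add: subst_nf_def)

lemma subst_nf_pCons: "subst_nf P Q (pCons p A) = weyl_eval Q p + subst_nf P Q A * P"
  by (cases "p = 0 \<and> A = 0") (auto simp: subst_nf_def cCons_def)

lemma subst_nf_const [simp]: "subst_nf P Q [:p:] = weyl_eval Q p"
  by (simp add: subst_nf_pCons)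

lemma subst_nf_add: "subst_nf P Q (A + B) = subst_nf P Q A + subst_nf P Q B"
  by (induction A B rule: poly_induct2) (simp_all add: subst_nf_pCons weyl_eval_add algebra_simps)

lemma subst_nf_smult: "subst_nf P Q (smult [:c:] A) = weyl_const c * subst_nf P Q A"
  by (induction A) (simp_all add: subst_nf_pCons weyl_eval_smult algebra_simps)

lemma subst_nf_X_mult: "subst_nf P Q (smult [:0,1:] A) = Q * subst_nf P Q A"
  by (induction A) (simp_all add: subst_nf_pCons weyl_eval_pCons algebra_simps)

lemma subst_nf_Y_mult:
  assumes "P * Q - Q * P = 1"
  shows "subst_nf P Q (pCons 0 A + xderiv A) = P * subst_nf P Q A"
proof (induction A)
  case 0
  then show ?case by simp
next
  case (pCons a A)
  have "pCons 0 (pCons a A) + xderiv (pCons a A) = pCons (pderiv a) ([:a:] + (pCons 0 A + xderiv A))"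
    by (simp add: map_poly_pCons)
  then have "subst_nf P Q (pCons 0 (pCons a A) + xderiv (pCons a A)) =
      weyl_eval Q (pderiv a) + (weyl_eval Q a + subst_nf P Q (pCons 0 A + xderiv A)) * P"
    by (simp add: subst_nf_pCons subst_nf_add)
  also have "\<dots> = weyl_eval Q (pderiv a) + (weyl_eval Q a + P * subst_nf P Q A) * P"
    by (simp only: pCons.IH)
  also have "\<dots> = P * subst_nf P Q (pCons a A)"
    using weyl_eval_pderiv[OF assms, of a] by (simp add: subst_nf_pCons algebra_simps)
  finally show ?case .
qed

context
  fixes P Q :: "'a::field_char_0 weyl"
  assumes PQ: "P * Q - Q * P = 1"
begin

lemma weyl_subst_0 [simp]: "weyl_subst P Q 0 = 0"
  by (simp add: weyl_subst_def)

lemma weyl_subst_add: "weyl_subst P Q (a + b) = weyl_subst P Q a + weyl_subst P Q b"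
  by (simp add: weyl_subst_def subst_nf_add)

lemma weyl_subst_diff: "weyl_subst P Q (a - b) = weyl_subst P Q a - weyl_subst P Q b"
  using weyl_subst_add[of "a - b" b] by (simp add: algebra_simps)

lemma weyl_subst_const_mult: "weyl_subst P Q (weyl_const c * a) = weyl_const c * weyl_subst P Q a"
  by (simp add: weyl_subst_def subst_nf_smult)

lemma weyl_subst_X_mult: "weyl_subst P Q (gen_X * a) = Q * weyl_subst P Q a"
  by (simp add: weyl_subst_def subst_nf_X_mult)

lemma weyl_subst_Y_mult: "weyl_subst P Q (gen_Y * a) = P * weyl_subst P Q a"
  by (simp add: weyl_subst_def subst_nf_Y_mult[OF PQ])

lemma weyl_subst_1 [simp]: "weyl_subst P Q 1 = 1"
  by (simp add: weyl_subst_def one_pCons)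

lemma weyl_subst_const [simp]: "weyl_subst P Q (weyl_const c) = weyl_const c"
  using weyl_subst_const_mult[of c 1] by simp

lemma weyl_subst_X [simp]: "weyl_subst P Q gen_X = Q"
  using weyl_subst_X_mult[of 1] by simp

lemma weyl_subst_Y [simp]: "weyl_subst P Q gen_Y = P"
  using weyl_subst_Y_mult[of 1] by simp

lemma weyl_subst_mult_poly_X:
  "weyl_subst P Q (Abs_weyl [:p:] * b) = weyl_subst P Q (Abs_weyl [:p:]) * weyl_subst P Q b"
proof (induction p arbitrary: b)
  case 0
  then show ?case by (simp add: Abs_weyl_simps)
next
  case (pCons c p)
  have "weyl_subst P Q (Abs_weyl [:pCons c p:]) = weyl_const c + Q * weyl_subst P Q (Abs_weyl [:p:])"
    using pCons.IH[of 1] by (simp add: Abs_weyl_pCons_const weyl_subst_add weyl_subst_X_mult)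
  then show ?case
    by (simp add: Abs_weyl_pCons_const distrib_right weyl_subst_add weyl_subst_const_mult
        weyl_subst_X_mult mult.assoc pCons.IH algebra_simps)
qed

lemma weyl_subst_mult: "weyl_subst P Q (a * b) = weyl_subst P Q a * weyl_subst P Q b"
proof -
  have "weyl_subst P Q (Abs_weyl A * b) = weyl_subst P Q (Abs_weyl A) * weyl_subst P Q b" for A b
  proof (induction A arbitrary: b)
    case 0
    then show ?case by (simp add: Abs_weyl_simps)
  next
    case (pCons p A)
    have "weyl_subst P Q (Abs_weyl (pCons p A) * b)
        = weyl_subst P Q (Abs_weyl [:p:] * b) + weyl_subst P Q (Abs_weyl A * (gen_Y * b))"
      unfolding Abs_weyl_pCons[of p A] distrib_right weyl_subst_add mult.assoc ..
    also have "\<dots> = weyl_subst P Q (Abs_weyl [:p:]) * weyl_subst P Q b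
        + weyl_subst P Q (Abs_weyl A) * (P * weyl_subst P Q b)"
      by (simp only: weyl_subst_mult_poly_X pCons.IH weyl_subst_Y_mult)
    also have "\<dots> = weyl_subst P Q (Abs_weyl (pCons p A)) * weyl_subst P Q b"
      using pCons.IH[of gen_Y] unfolding Abs_weyl_pCons[of p A] weyl_subst_add
      by (simp add: distrib_right mult.assoc)
    finally show ?case .
  qed
  from this[of "Rep_weyl a"] show ?thesis by (simp add: Rep_weyl_inverse)
qed

text \<open>The kernel is stable under \<open>[\<cdot>, X] = \<partial>\<^sub>Y\<close> and \<open>[Y, \<cdot>] = \<partial>\<^sub>X\<close>, which reduce any nonzero
  element to a nonzero constant.\<close>

lemma weyl_subst_kernel_pderiv:
  assumes "weyl_subst P Q a = 0"
  shows "weyl_subst P Q (Abs_weyl ((pderiv ^^ k) (Rep_weyl a))) = 0"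
proof (induction k)
  case 0
  then show ?case using assms by (simp add: Rep_weyl_inverse)
next
  case (Suc k)
  let ?b = "Abs_weyl ((pderiv ^^ k) (Rep_weyl a))"
  have "Abs_weyl ((pderiv ^^ Suc k) (Rep_weyl a)) = ?b * gen_X - gen_X * ?b"
    by (rule weyl_eqI) simp
  then show ?case by (simp add: weyl_subst_diff weyl_subst_mult Suc.IH)
qed

lemma weyl_subst_kernel_xderiv:
  assumes "weyl_subst P Q a = 0"
  shows "weyl_subst P Q (Abs_weyl ((xderiv ^^ k) (Rep_weyl a))) = 0"
proof (induction k)
  case 0
  then show ?case using assms by (simp add: Rep_weyl_inverse)
next
  case (Suc k)
  let ?b = "Abs_weyl ((xderiv ^^ k) (Rep_weyl a))"
  have "Abs_weyl ((xderiv ^^ Suc k) (Rep_weyl a)) = gen_Y * ?b - ?b * gen_Y"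
    by (rule weyl_eqI) simp
  then show ?case by (simp add: weyl_subst_diff weyl_subst_mult Suc.IH)
qed

lemma inj_weyl_subst: "inj (weyl_subst P Q)"
proof -
  have "a = 0" if "weyl_subst P Q a = 0" for a
  proof (rule ccontr)
    assume "a \<noteq> 0"
    then have "Rep_weyl a \<noteq> 0" by (metis Rep_weyl_simps(5) weyl_eqI)
    define c where "c = fact (degree (Rep_weyl a)) * lead_coeff (Rep_weyl a)"
    have "c \<noteq> 0" using \<open>Rep_weyl a \<noteq> 0\<close> by (simp add: c_def)
    have "weyl_subst P Q (Abs_weyl [:c:]) = 0"
      using weyl_subst_kernel_pderiv[OF that, of "degree (Rep_weyl a)"]
      by (simp add: higher_pderiv_degree c_def)
    from weyl_subst_kernel_xderiv[OF this, of "degree c"]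
    have "weyl_subst P Q (weyl_const (fact (degree c) * lead_coeff c)) = 0"
      using higher_xderiv_monom[of "degree c" c 0]
      by (simp add: higher_pderiv_degree weyl_const_def monom_0)
    then show False using \<open>c \<noteq> 0\<close> by (simp add: weyl_eqI)
  qed
  then show ?thesis by (intro injI) (metis right_minus_eq weyl_subst_diff)
qed

end

definition weyl_subalgebra :: "'a::field_char_0 weyl set \<Rightarrow> bool" where
  "weyl_subalgebra S \<longleftrightarrow> (\<forall>c. weyl_const c \<in> S) \<and> (\<forall>a\<in>S. \<forall>b\<in>S. a + b \<in> S \<and> a * b \<in> S)"

lemma weyl_subalgebra_range_subst:
  assumes "P * Q - Q * P = 1"
  shows "weyl_subalgebra (range (weyl_subst P Q))"
  unfolding weyl_subalgebra_def
proof (intro conjI ballI allI)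
  fix a b assume "a \<in> range (weyl_subst P Q)" "b \<in> range (weyl_subst P Q)"
  then obtain a' b' where "a = weyl_subst P Q a'" "b = weyl_subst P Q b'" by auto
  then show "a + b \<in> range (weyl_subst P Q)" "a * b \<in> range (weyl_subst P Q)"
    using weyl_subst_add[OF assms, of a' b'] weyl_subst_mult[OF assms, of a' b'] by (metis rangeI)+
next
  fix c show "weyl_const c \<in> range (weyl_subst P Q)"
    using weyl_subst_const[OF assms, of c] by (metis rangeI)
qed

lemma weyl_subalgebraD:
  assumes "weyl_subalgebra S"
  shows weyl_subalgebra_const: "weyl_const c \<in> S"
    and weyl_subalgebra_add: "a \<in> S \<Longrightarrow> b \<in> S \<Longrightarrow> a + b \<in> S"
    and weyl_subalgebra_mult: "a \<in> S \<Longrightarrow> b \<in> S \<Longrightarrow> a * b \<in> S"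
  using assms unfolding weyl_subalgebra_def by blast+

lemma weyl_subalgebra_0: "weyl_subalgebra S \<Longrightarrow> 0 \<in> S"
  using weyl_subalgebra_const[of S 0] by simp

lemma weyl_subalgebra_diff:
  assumes "weyl_subalgebra S" "a \<in> S" "b \<in> S"
  shows "a - b \<in> S"
proof -
  have "weyl_const (-1) = - 1"
    using weyl_const_add[of "-1" 1] by (simp add: eq_neg_iff_add_eq_0)
  then have "a - b = a + weyl_const (-1) * b" by (metis diff_conv_add_uminus mult_minus1)
  also have "\<dots> \<in> S"
    using assms by (intro weyl_subalgebra_add weyl_subalgebra_mult weyl_subalgebra_const)
  finally show ?thesis .
qed

lemma weyl_subalgebra_poly_X:
  assumes "weyl_subalgebra S" "gen_X \<in> S"
  shows "Abs_weyl [:p:] \<in> S"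
proof (induction p)
  case 0
  then show ?case using weyl_subalgebra_0[OF assms(1)] by (simp add: Abs_weyl_simps)
next
  case (pCons c p)
  then show ?case unfolding Abs_weyl_pCons_const
    using assms by (intro weyl_subalgebra_add weyl_subalgebra_mult weyl_subalgebra_const)
qed

lemma weyl_subalgebra_poly_Y:
  assumes "weyl_subalgebra S" "gen_Y \<in> S" "xderiv G = 0"
  shows "Abs_weyl G \<in> S"
  using assms(3)
proof (induction G)
  case 0
  then show ?case using weyl_subalgebra_0[OF assms(1)] by (simp add: Abs_weyl_simps)
next
  case (pCons p G)
  then have "pderiv p = 0" "xderiv G = 0" by (simp_all add: map_poly_pCons)
  then have "Abs_weyl [:p:] = weyl_const (coeff p 0)"
    unfolding weyl_const_def by (metis pderiv_iszero coeff_pCons_0)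
  then show ?case unfolding Abs_weyl_pCons[of p G]
    using assms pCons.IH[OF \<open>xderiv G = 0\<close>]
    by (metis weyl_subalgebra_add weyl_subalgebra_mult weyl_subalgebra_const)
qed

lemma weyl_subalgebra_UNIV:
  assumes "weyl_subalgebra S" "gen_X \<in> S" "gen_Y \<in> S"
  shows "a \<in> S"
proof -
  have "Abs_weyl A \<in> S" for A
  proof (induction A)
    case 0
    show ?case using weyl_subalgebra_poly_X[OF assms(1,2), of 0] by simp
  next
    case (pCons p A)
    then show ?case unfolding Abs_weyl_pCons[of p A]
      using assms weyl_subalgebra_poly_X[OF assms(1,2), of p]
      by (intro weyl_subalgebra_add weyl_subalgebra_mult)
  qed
  from this[of "Rep_weyl a"] show ?thesis by (simp add: Rep_weyl_inverse)
qed

lemma bij_Rep_weyl_conj: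
  fixes f :: "'a::field_char_0 weyl \<Rightarrow> 'a weyl"
  assumes "bij f"
  shows "bij (\<lambda>A. Rep_weyl (f (Abs_weyl A)))"
proof -
  have R: "bij (Rep_weyl :: 'a weyl \<Rightarrow> 'a poly poly)"
  proof (rule bijI)
    show "inj (Rep_weyl :: 'a weyl \<Rightarrow> 'a poly poly)" by (rule injI) (simp add: Rep_weyl_inject)
    show "surj (Rep_weyl :: 'a weyl \<Rightarrow> 'a poly poly)" by (rule surjI[of _ Abs_weyl]) simp
  qed
  have A: "bij (Abs_weyl :: 'a poly poly \<Rightarrow> 'a weyl)"
  proof (rule bijI)
    show "inj (Abs_weyl :: 'a poly poly \<Rightarrow> 'a weyl)" by (rule injI) (metis Rep_weyl_Abs_weyl)
    show "surj (Abs_weyl :: 'a poly poly \<Rightarrow> 'a weyl)"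
      by (rule surjI[of _ Rep_weyl]) (rule Rep_weyl_inverse)
  qed
  show ?thesis using bij_comp[OF bij_comp[OF A assms] R] by (simp add: comp_def)
qed

definition weyl_aut_pair :: "'a::field_char_0 poly poly \<Rightarrow> 'a poly poly \<Rightarrow> bool" where
  "weyl_aut_pair P Q \<longleftrightarrow> (\<exists>\<tau>. weyl_aut \<tau> \<and> P = \<tau> weyl_Y \<and> Q = \<tau> weyl_X)"

text \<open>The automorphism is \<open>A \<mapsto> A(X := Q, Y := P)\<close>: it is an injective endomorphism, and
  surjective as soon as \<open>X\<close> and \<open>Y\<close> lie in every subalgebra containing \<open>P\<close> and \<open>Q\<close>.\<close>

lemma weyl_aut_pairI:
  fixes P Q :: "'a::field_char_0 poly poly"
  assumes PQ: "weyl_comm P Q = 1"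
    and gen: "\<And>S. weyl_subalgebra S \<Longrightarrow> Abs_weyl P \<in> S \<Longrightarrow> Abs_weyl Q \<in> S \<Longrightarrow>
      gen_X \<in> S \<and> gen_Y \<in> S"
  shows "weyl_aut_pair P Q"
proof -
  let ?s = "weyl_subst (Abs_weyl P) (Abs_weyl Q)"
  have PQw: "Abs_weyl P * Abs_weyl Q - Abs_weyl Q * Abs_weyl P = 1"
    using PQ by (simp add: weyl_comm_eq_1_iff)
  define \<tau> where "\<tau> A = Rep_weyl (?s (Abs_weyl A))" for A
  have S: "weyl_subalgebra (range ?s)" by (rule weyl_subalgebra_range_subst[OF PQw])
  have "Abs_weyl P \<in> range ?s" "Abs_weyl Q \<in> range ?s"
    using weyl_subst_Y[OF PQw] weyl_subst_X[OF PQw] by (metis rangeI)+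
  then have "surj ?s"
    using weyl_subalgebra_UNIV[OF S] gen[OF S] by blast
  have "bij \<tau>"
    unfolding \<tau>_def using inj_weyl_subst[OF PQw] \<open>surj ?s\<close>
    by (intro bij_Rep_weyl_conj) (simp add: bij_def)
  moreover have "\<tau> (A + B) = \<tau> A + \<tau> B" for A B
    by (simp add: \<tau>_def Abs_weyl_simps weyl_subst_add[OF PQw])
  moreover have "\<tau> (smult [:c:] A) = smult [:c:] (\<tau> A)" for c A
    by (simp add: \<tau>_def Abs_weyl_smult weyl_subst_const_mult[OF PQw])
  moreover have "\<tau> (weyl_mult A B) = weyl_mult (\<tau> A) (\<tau> B)" for A B
    by (simp add: \<tau>_def Abs_weyl_simps weyl_subst_mult[OF PQw])
  moreover have "\<tau> 1 = 1"
    by (simp add: \<tau>_def Abs_weyl_simps weyl_subst_1[OF PQw])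
  ultimately have "weyl_aut \<tau>" unfolding weyl_aut_def by blast
  moreover have "\<tau> weyl_Y = P" "\<tau> weyl_X = Q"
    using weyl_subst_Y[OF PQw] weyl_subst_X[OF PQw] by (simp_all add: \<tau>_def flip: gen_X_def gen_Y_def)
  ultimately show ?thesis unfolding weyl_aut_pair_def by metis
qed

lemma weyl_aut_comp: "weyl_aut \<sigma> \<Longrightarrow> weyl_aut \<tau> \<Longrightarrow> weyl_aut (\<sigma> \<circ> \<tau>)"
  unfolding weyl_aut_def by (simp add: bij_comp)

lemma weyl_aut_uminus:
  assumes "weyl_aut \<tau>"
  shows "\<tau> (- A) = - \<tau> A"
proof -
  have add: "\<tau> (A + B) = \<tau> A + \<tau> B" for A B using assms unfolding weyl_aut_def by blast
  have "\<tau> 0 = 0" using add[of 0 0] by simp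
  then show ?thesis using add[of A "- A"] by (simp add: eq_neg_iff_add_eq_0 add.commute)
qed

text \<open>\<open>Y \<mapsto> -X, X \<mapsto> Y\<close> is an automorphism, so the conclusion is invariant under
  \<open>(P, Q) \<mapsto> (Q, -P)\<close>.\<close>

lemma weyl_aut_pair_swap:
  assumes "weyl_aut_pair Q (- P)"
  shows "weyl_aut_pair P Q"
proof -
  obtain \<tau> where \<tau>: "weyl_aut \<tau>" "Q = \<tau> weyl_Y" "- P = \<tau> weyl_X"
    using assms unfolding weyl_aut_pair_def by blast
  have "weyl_aut_pair (- weyl_X) (weyl_Y :: 'a poly poly)"
  proof (rule weyl_aut_pairI)
    have "weyl_comm (- weyl_X) (weyl_Y :: 'a poly poly) = weyl_comm weyl_Y weyl_X"
      by (metis weyl_comm_swap weyl_comm_uminus_right minus_minus)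
    also have "\<dots> = 1"
      by (simp add: weyl_comm_Y weyl_X_def monom_0 map_poly_pCons pderiv_pCons one_pCons)
    finally show "weyl_comm (- weyl_X) (weyl_Y :: 'a poly poly) = 1" .
  next
    fix S :: "'a weyl set"
    assume S: "weyl_subalgebra S" "Abs_weyl (- weyl_X) \<in> S" "Abs_weyl weyl_Y \<in> S"
    have "gen_X = 0 - Abs_weyl (- weyl_X)" by (rule weyl_eqI) simp
    then show "gen_X \<in> S \<and> gen_Y \<in> S"
      using S weyl_subalgebra_diff weyl_subalgebra_0 by (metis gen_Y_def)
  qed
  then obtain \<rho> :: "'a poly poly \<Rightarrow> 'a poly poly"
    where \<rho>: "weyl_aut \<rho>" "- weyl_X = \<rho> weyl_Y" "weyl_Y = \<rho> weyl_X"
    unfolding weyl_aut_pair_def by blast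
  have "weyl_aut (\<tau> \<circ> \<rho>)" using \<tau>(1) \<rho>(1) by (rule weyl_aut_comp)
  moreover have "P = (\<tau> \<circ> \<rho>) weyl_Y"
    using \<rho>(2)[symmetric] \<tau>(3)[symmetric] weyl_aut_uminus[OF \<tau>(1)] by simp
  moreover have "Q = (\<tau> \<circ> \<rho>) weyl_X" using \<rho>(3)[symmetric] \<tau>(2) by simp
  ultimately show ?thesis unfolding weyl_aut_pair_def by blast
qed

lemma weyl_comm_triangular:
  assumes c: "c \<noteq> 0" and G: "xderiv G = 0"
  shows "weyl_comm (monom [:c:] 1 + [:f:]) ([:[:0, inverse c:]:] + G) = 1 + weyl_comm [:f:] G"
proof -
  have "weyl_comm (monom [:c:] 1) [:[:0, inverse c:]:] = 1"
    unfolding weyl_comm_left_cY using c by (simp add: map_poly_pCons pderiv_pCons one_pCons)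
  moreover have "weyl_comm (monom [:c:] 1) G = 0" unfolding weyl_comm_left_cY G by simp
  moreover have "weyl_comm [:f:] [:[:0, inverse c:]:] = 0" by (simp add: weyl_comm_right_cX)
  ultimately show ?thesis unfolding weyl_comm_add_left weyl_comm_add_right by simp
qed

lemma weyl_aut_pair_triangular:
  fixes f :: "'a::field_char_0 poly"
  assumes PQ: "weyl_comm P Q = 1" and c: "c \<noteq> 0"
    and P: "P = monom [:c:] 1 + [:f:]" and Q: "Q = [:[:0, inverse c:]:] + G"
    and G: "xderiv G = 0"
  shows "weyl_aut_pair P Q"
proof (rule weyl_aut_pairI[OF PQ])
  have "weyl_comm G [:f:] = 0"
    using PQ weyl_comm_triangular[OF c G, of f] weyl_comm_swap[of "[:f:]" G] unfolding P Q by simp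
  then have const: "degree G = 0 \<or> degree f = 0" by (rule weyl_comm_KY_KX_eq_0[OF G])
  fix S assume S: "weyl_subalgebra S" "Abs_weyl P \<in> S" "Abs_weyl Q \<in> S"
  have Pw: "Abs_weyl P = weyl_const c * gen_Y + Abs_weyl [:f:]"
    unfolding P Abs_weyl_simps(1) Abs_weyl_const_Y ..
  have Qw: "Abs_weyl Q = weyl_const (inverse c) * gen_X + Abs_weyl G"
    unfolding Q Abs_weyl_simps(1) Abs_weyl_const_X ..
  have X: "gen_X \<in> S" if "Abs_weyl G \<in> S"
  proof -
    have "gen_X = weyl_const c * (Abs_weyl Q - Abs_weyl G)"
      using c by (simp add: Qw weyl_const_inverse_cancel)
    also have "\<dots> \<in> S"
      using S that by (intro weyl_subalgebra_mult weyl_subalgebra_const weyl_subalgebra_diff)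
    finally show ?thesis .
  qed
  have Y: "gen_Y \<in> S" if "Abs_weyl [:f:] \<in> S"
  proof -
    have "gen_Y = weyl_const (inverse c) * (Abs_weyl P - Abs_weyl [:f:])"
      using c by (simp add: Pw weyl_const_inverse_cancel)
    also have "\<dots> \<in> S"
      using S that by (intro weyl_subalgebra_mult weyl_subalgebra_const weyl_subalgebra_diff)
    finally show ?thesis .
  qed
  show "gen_X \<in> S \<and> gen_Y \<in> S"
    using const
  proof
    assume "degree G = 0"
    moreover have "degree (coeff G 0) = 0"
      using G by (metis coeff_xderiv coeff_0 pderiv_eq_0_iff)
    ultimately have "G = [:[:coeff (coeff G 0) 0:]:]" by (metis degree_0_id)
    then have "Abs_weyl G \<in> S"
      using weyl_subalgebra_const[OF S(1)] unfolding weyl_const_def by metis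
    then show ?thesis using X Y weyl_subalgebra_poly_X[OF S(1)] by blast
  next
    assume "degree f = 0"
    then have "Abs_weyl [:f:] \<in> S"
      using weyl_subalgebra_const[OF S(1)] unfolding weyl_const_def by (metis degree_0_id)
    then show ?thesis using X Y weyl_subalgebra_poly_Y[OF S(1) _ G] by blast
  qed
qed

lemma weyl_aut_pair_triangular_X:
  fixes f :: "'a::field_char_0 poly"
  assumes "weyl_comm P Q = 1" and "c \<noteq> 0"
    and "P = [:[:0, c:]:] + G" and "Q = monom [:- inverse c:] 1 + [:f:]"
    and "xderiv G = 0"
  shows "weyl_aut_pair P Q"
proof (rule weyl_aut_pair_swap, rule weyl_aut_pair_triangular)
  show "weyl_comm Q (- P) = 1"
    using assms(1) by (simp add: weyl_comm_uminus_right weyl_comm_swap[of Q P])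
  show "- inverse c \<noteq> 0" using assms(2) by simp
  show "Q = monom [:- inverse c:] 1 + [:f:]" by (rule assms(4))
  show "- P = [:[:0, inverse (- inverse c):]:] + - G" using assms(3) by simp
  show "xderiv (- G) = 0"
    using assms(5)
    by (metis coeff_xderiv coeff_minus pderiv_minus neg_equal_0_iff_equal coeff_0 poly_eqI)
qed

lemma weyl_aut_pair_linear:
  assumes PQ: "weyl_comm P Q = 1" and det: "a * b' - a' * b \<noteq> 0"
    and P: "P = [:[:0, a:]:] + monom [:b:] 1" and Q: "Q = [:[:0, a':]:] + monom [:b':] 1"
  shows "weyl_aut_pair P Q"
proof (rule weyl_aut_pairI[OF PQ])
  fix S assume S: "weyl_subalgebra S" "Abs_weyl P \<in> S" "Abs_weyl Q \<in> S"
  let ?d = "a * b' - a' * b"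
  have "gen_X = weyl_const (inverse ?d) * (weyl_const b' * Abs_weyl P - weyl_const b * Abs_weyl Q)"
  proof (rule weyl_eqI)
    have "Rep_weyl (weyl_const (inverse ?d) * (weyl_const b' * Abs_weyl P - weyl_const b * Abs_weyl Q))
        = smult [:inverse ?d:] (smult [:b':] P - smult [:b:] Q)"
      by simp
    also have "\<dots> = [:[:0, 1:]:]"
      unfolding P Q using det by (simp add: monom_Suc monom_0 field_simps)
    finally show "Rep_weyl gen_X = Rep_weyl (weyl_const (inverse ?d) *
        (weyl_const b' * Abs_weyl P - weyl_const b * Abs_weyl Q))"
      by (simp add: weyl_X_def monom_0)
  qed
  moreover have
    "gen_Y = weyl_const (inverse ?d) * (weyl_const a * Abs_weyl Q - weyl_const a' * Abs_weyl P)"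
  proof (rule weyl_eqI)
    have "Rep_weyl (weyl_const (inverse ?d) * (weyl_const a * Abs_weyl Q - weyl_const a' * Abs_weyl P))
        = smult [:inverse ?d:] (smult [:a:] Q - smult [:a':] P)"
      by simp
    also have "\<dots> = monom 1 1"
      unfolding P Q using det by (simp add: monom_Suc monom_0 field_simps)
    finally show "Rep_weyl gen_Y = Rep_weyl (weyl_const (inverse ?d) *
        (weyl_const a * Abs_weyl Q - weyl_const a' * Abs_weyl P))"
      by (simp add: weyl_Y_def)
  qed
  ultimately show "gen_X \<in> S \<and> gen_Y \<in> S"
    using S by (metis weyl_subalgebra_diff weyl_subalgebra_mult weyl_subalgebra_const)
qed

section \<open>The grading\<close>

definition weyl_homog :: "int \<Rightarrow> 'a::field_char_0 poly poly \<Rightarrow> bool" where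
  "weyl_homog n A \<longleftrightarrow> (\<forall>i j. coeff (coeff A j) i \<noteq> 0 \<longrightarrow> int i - int j = n)"

lemma weyl_homog_0 [simp]: "weyl_homog n 0"
  by (simp add: weyl_homog_def)

lemma weyl_homog_1 [simp]: "weyl_homog 0 1"
  unfolding weyl_homog_def by (auto simp: coeff_1 split: if_splits)

lemma weyl_homog_add: "weyl_homog n A \<Longrightarrow> weyl_homog n B \<Longrightarrow> weyl_homog n (A + B)"
  unfolding weyl_homog_def by (metis add.right_neutral coeff_add add_0)

lemma weyl_homog_uminus: "weyl_homog n A \<Longrightarrow> weyl_homog n (- A)"
  unfolding weyl_homog_def by simp

lemma weyl_homog_diff: "weyl_homog n A \<Longrightarrow> weyl_homog n B \<Longrightarrow> weyl_homog n (A - B)"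
  using weyl_homog_add[of n A "- B"] weyl_homog_uminus[of n B] by simp

lemma weyl_homog_smult: "weyl_homog n A \<Longrightarrow> weyl_homog n (smult [:c:] A)"
  unfolding weyl_homog_def by simp

lemma weyl_homog_sum: "(\<And>x. x \<in> S \<Longrightarrow> weyl_homog n (F x)) \<Longrightarrow> weyl_homog n (sum F S)"
  by (induction S rule: infinite_finite_induct) (simp_all add: weyl_homog_add)

lemma weyl_homog_coeff:
  assumes "weyl_homog n A"
  shows "coeff A j =
    (if 0 \<le> n + int j then monom (coeff (coeff A j) (nat (n + int j))) (nat (n + int j)) else 0)"
proof (rule poly_eqI)
  fix i
  show "coeff (coeff A j) i = coeff (if 0 \<le> n + int j
      then monom (coeff (coeff A j) (nat (n + int j))) (nat (n + int j)) else 0) i"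
  proof (cases "coeff (coeff A j) i = 0")
    case True
    then show ?thesis by (auto simp: coeff_monom)
  next
    case False
    then have "int i - int j = n" using assms unfolding weyl_homog_def by blast
    then show ?thesis by (auto simp: coeff_monom)
  qed
qed

text \<open>Here \<open>*\<close> is the commutative product of \<^typ>\<open>'a poly poly\<close>, as in the series.\<close>

lemma weyl_homog_mult:
  assumes "weyl_homog a U" "weyl_homog b V"
  shows "weyl_homog (a + b) (U * V)"
  unfolding weyl_homog_def
proof (intro allI impI)
  fix i j assume "coeff (coeff (U * V) j) i \<noteq> 0"
  then have "(\<Sum>l\<le>j. coeff (coeff U l * coeff V (j - l)) i) \<noteq> 0"
    by (simp add: coeff_mult coeff_sum)
  then obtain l where l: "l \<le> j" "coeff (coeff U l * coeff V (j - l)) i \<noteq> 0"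
    by (auto elim: sum.not_neutral_contains_not_neutral)
  then have "(\<Sum>r\<le>i. coeff (coeff U l) r * coeff (coeff V (j - l)) (i - r)) \<noteq> 0"
    by (simp add: coeff_mult)
  then obtain r where r: "r \<le> i" "coeff (coeff U l) r \<noteq> 0" "coeff (coeff V (j - l)) (i - r) \<noteq> 0"
    by (auto elim: sum.not_neutral_contains_not_neutral)
  have "int r - int l = a" using r assms(1) unfolding weyl_homog_def by blast
  moreover have "int (i - r) - int (j - l) = b" using r assms(2) unfolding weyl_homog_def by blast
  ultimately show "int i - int j = a + b" using l(1) r(1) by simp
qed

lemma weyl_homog_pderiv:
  assumes "weyl_homog n A"
  shows "weyl_homog (n + 1) (pderiv A)"
  unfolding weyl_homog_def
proof (intro allI impI)
  fix i j assume "coeff (coeff (pderiv A) j) i \<noteq> 0"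
  then have "coeff (coeff A (Suc j)) i \<noteq> 0" by (simp add: coeff_pderiv of_nat_poly)
  then have "int i - int (Suc j) = n" using assms unfolding weyl_homog_def by blast
  then show "int i - int j = n + 1" by simp
qed

lemma weyl_homog_xderiv:
  assumes "weyl_homog n A"
  shows "weyl_homog (n - 1) (xderiv A)"
  unfolding weyl_homog_def
proof (intro allI impI)
  fix i j assume "coeff (coeff (xderiv A) j) i \<noteq> 0"
  then have "coeff (coeff A j) (Suc i) \<noteq> 0" by (simp add: coeff_pderiv)
  then have "int (Suc i) - int j = n" using assms unfolding weyl_homog_def by blast
  then show "int i - int j = n - 1" by simp
qed

lemma weyl_homog_higher_pderiv: "weyl_homog n A \<Longrightarrow> weyl_homog (n + int k) ((pderiv ^^ k) A)"
proof (induction k)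
  case (Suc k)
  then show ?case using weyl_homog_pderiv[of "n + int k" "(pderiv ^^ k) A"] by (simp add: algebra_simps)
qed simp

lemma weyl_homog_higher_xderiv: "weyl_homog n A \<Longrightarrow> weyl_homog (n - int k) ((xderiv ^^ k) A)"
  by (induction k) (auto dest: weyl_homog_xderiv simp: algebra_simps)

lemma weyl_homog_weyl_mult:
  assumes "weyl_homog n A" "weyl_homog m B"
  shows "weyl_homog (n + m) (weyl_mult A B)"
  unfolding weyl_mult_eq_series[OF order.refl] weyl_mult_series_def
proof (rule weyl_homog_sum)
  fix k
  have "weyl_homog ((n + int k) + (m - int k)) ((pderiv ^^ k) A * (xderiv ^^ k) B)"
    by (rule weyl_homog_mult[OF weyl_homog_higher_pderiv[OF assms(1)]
          weyl_homog_higher_xderiv[OF assms(2)]])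
  then show "weyl_homog (n + m) (smult [:inverse (fact k):] ((pderiv ^^ k) A * (xderiv ^^ k) B))"
    by (intro weyl_homog_smult) simp
qed

lemma weyl_homog_weyl_comm:
  assumes "weyl_homog n A" "weyl_homog m B"
  shows "weyl_homog (n + m) (weyl_comm A B)"
  unfolding weyl_comm_def
  using weyl_homog_weyl_mult[OF assms] weyl_homog_weyl_mult[OF assms(2,1)]
  by (simp add: weyl_homog_diff add.commute)

lemma weyl_homog_lead_coeff_nonzero:
  assumes "weyl_homog n A" "A \<noteq> 0"
  obtains i where "coeff (lead_coeff A) i \<noteq> 0" "int i - int (degree A) = n"
proof -
  have "lead_coeff A \<noteq> 0" using assms by simp
  then obtain i where "coeff (lead_coeff A) i \<noteq> 0" by (metis leading_coeff_0_iff)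
  then show ?thesis using that assms(1) unfolding weyl_homog_def by blast
qed

lemma weyl_homog_unique:
  assumes "weyl_homog n A" "weyl_homog m A" "A \<noteq> 0"
  shows "n = m"
proof -
  obtain i where "coeff (lead_coeff A) i \<noteq> 0" "int i - int (degree A) = n"
    using weyl_homog_lead_coeff_nonzero[OF assms(1,3)] .
  then show ?thesis using assms(2) unfolding weyl_homog_def by blast
qed

lemma weyl_homog_degree_ge:
  assumes "weyl_homog n A" "A \<noteq> 0"
  shows "0 \<le> n + int (degree A)"
proof -
  obtain i where "int i - int (degree A) = n"
    using weyl_homog_lead_coeff_nonzero[OF assms] .
  then show ?thesis by simp
qed

lemma weyl_homog_lead_coeff:
  assumes "weyl_homog n A" "A \<noteq> 0"
  defines "e \<equiv> nat (n + int (degree A))"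
  shows "lead_coeff A = monom (coeff (lead_coeff A) e) e" "coeff (lead_coeff A) e \<noteq> 0"
proof -
  show "lead_coeff A = monom (coeff (lead_coeff A) e) e"
    using weyl_homog_coeff[OF assms(1), of "degree A"] weyl_homog_degree_ge[OF assms(1,2)]
    unfolding e_def by simp
  then show "coeff (lead_coeff A) e \<noteq> 0"
    using assms(2) by (metis leading_coeff_0_iff monom_eq_0_iff)
qed

text \<open>Leading term of a commutator of homogeneous elements: the Poisson bracket of
  \<open>c X\<^sup>e Y\<^sup>\<alpha>\<close> and \<open>d X\<^sup>e\<^sup>' Y\<^sup>\<beta>\<close> is \<open>c d (\<alpha> e' - \<beta> e) X\<^sup>e\<^sup>+\<^sup>e\<^sup>'\<^sup>-\<^sup>1 Y\<^sup>\<alpha>\<^sup>+\<^sup>\<beta>\<^sup>-\<^sup>1\<close>, and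
  \<open>\<alpha> e' - \<beta> e = \<alpha> m - \<beta> n\<close>.\<close>

lemma weyl_comm_homog_leading:
  assumes hu: "weyl_homog n u" and hv: "weyl_homog m v" and u0: "u \<noteq> 0" and v0: "v \<noteq> 0"
    and det: "int (degree u) * m \<noteq> int (degree v) * n"
  shows "weyl_comm u v \<noteq> 0" and "degree (weyl_comm u v) = degree u + degree v - 1"
proof -
  define \<alpha> \<beta> where "\<alpha> = degree u" and "\<beta> = degree v"
  define e e' where "e = nat (n + int \<alpha>)" and "e' = nat (m + int \<beta>)"
  define c d where "c = coeff (lead_coeff u) e" and "d = coeff (lead_coeff v) e'"
  have lu: "lead_coeff u = monom c e" and c0: "c \<noteq> 0"
    using weyl_homog_lead_coeff[OF hu u0] unfolding c_def e_def \<alpha>_def by auto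
  have lv: "lead_coeff v = monom d e'" and d0: "d \<noteq> 0"
    using weyl_homog_lead_coeff[OF hv v0] unfolding d_def e'_def \<beta>_def by auto
  have ie: "int e = n + int \<alpha>" and ie': "int e' = m + int \<beta>"
    using weyl_homog_degree_ge[OF hu u0] weyl_homog_degree_ge[OF hv v0]
    unfolding e_def e'_def \<alpha>_def \<beta>_def by simp_all
  have ab: "1 \<le> \<alpha> + \<beta>"
  proof (rule ccontr)
    assume "\<not> 1 \<le> \<alpha> + \<beta>"
    then have "degree u = 0" "degree v = 0" unfolding \<alpha>_def \<beta>_def by auto
    then show False using det by simp
  qed
  have "int \<alpha> * int e' \<noteq> int \<beta> * int e"
    using det unfolding ie ie' \<alpha>_def \<beta>_def by (simp add: algebra_simps)
  then have nat_ne: "\<alpha> * e' \<noteq> \<beta> * e" by (metis of_nat_mult)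
  have "coeff (weyl_comm u v) (\<alpha> + \<beta> - 1) = smult (of_nat \<alpha>) (monom c e * pderiv (monom d e'))
      - smult (of_nat \<beta>) (monom d e' * pderiv (monom c e))"
    using coeff_weyl_comm_top[of u v] ab lu lv unfolding \<alpha>_def \<beta>_def by simp
  then have "coeff (coeff (weyl_comm u v) (\<alpha> + \<beta> - 1)) (e + e' - 1) =
      of_nat \<alpha> * c * d * of_nat e' - of_nat \<beta> * d * c * of_nat e"
    by (cases "e = 0"; cases "e' = 0") (simp_all add: pderiv_monom mult_monom coeff_monom)
  also have "\<dots> = c * d * (of_nat (\<alpha> * e') - of_nat (\<beta> * e))" by (simp add: algebra_simps)
  also have "\<dots> \<noteq> 0" using c0 d0 nat_ne by (simp del: of_nat_mult)
  finally have nz: "coeff (weyl_comm u v) (\<alpha> + \<beta> - 1) \<noteq> 0" by force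
  then show "weyl_comm u v \<noteq> 0" by force
  have "degree (weyl_comm u v) \<le> \<alpha> + \<beta> - 1"
    by (rule degree_le) (use coeff_weyl_comm_above[of u v] ab in \<open>auto simp: \<alpha>_def \<beta>_def\<close>)
  with nz le_degree show "degree (weyl_comm u v) = degree u + degree v - 1"
    unfolding \<alpha>_def \<beta>_def by fastforce
qed

lemma weyl_comm_homog_eq_0_imp:
  assumes "weyl_homog n u" "weyl_homog m v" "u \<noteq> 0" "v \<noteq> 0" "weyl_comm u v = 0"
  shows "int (degree u) * m = int (degree v) * n"
  using weyl_comm_homog_leading(1)[OF assms(1-4)] assms(5) by blast

definition weyl_component :: "int \<Rightarrow> 'a::field_char_0 poly poly \<Rightarrow> 'a poly poly" where
  "weyl_component k A = (\<Sum>j\<le>degree A. monom (if 0 \<le> k + int j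
      then monom (coeff (coeff A j) (nat (k + int j))) (nat (k + int j)) else 0) j)"

lemma coeff_weyl_component:
  "coeff (coeff (weyl_component k A) j) i = (if int i - int j = k then coeff (coeff A j) i else 0)"
proof -
  have "coeff (weyl_component k A) j = (if 0 \<le> k + int j
      then monom (coeff (coeff A j) (nat (k + int j))) (nat (k + int j)) else 0)"
    unfolding weyl_component_def coeff_sum
    by (simp add: coeff_monom sum.delta'[of "{..degree A}" j] coeff_eq_0 cong: if_cong)
  then show ?thesis by (auto simp: coeff_monom)
qed

lemma weyl_component_add: "weyl_component k (A + B) = weyl_component k A + weyl_component k B"
  by (rule poly_eqI, rule poly_eqI) (simp add: coeff_weyl_component)

lemma weyl_component_homog:
  "weyl_homog n A \<Longrightarrow> weyl_component k A = (if k = n then A else 0)"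
  by (rule poly_eqI, rule poly_eqI) (auto simp: coeff_weyl_component weyl_homog_def)

lemma weyl_homog_component: "weyl_homog k (weyl_component k A)"
  unfolding weyl_homog_def by (simp add: coeff_weyl_component)

lemma weyl_mass_le_2_decomp:
  assumes "weyl_mass P \<le> 2"
  obtains p1 p2 P1 P2 where "p2 < p1" "weyl_homog p1 P1" "weyl_homog p2 P2" "P = P1 + P2"
proof -
  define D where "D = {int i - int j | i j. coeff (coeff P j) i \<noteq> 0}"
  have "D \<subseteq> (\<lambda>(j, i). int i - int j) ` (SIGMA j:{..degree P}. {..degree (coeff P j)})"
    unfolding D_def by (force intro: le_degree)
  then have "finite D" by (rule finite_subset) auto
  moreover have "card D \<le> 2" using assms unfolding weyl_mass_def D_def .
  ultimately obtain p1 p2 where p: "p2 < p1" "D \<subseteq> {p1, p2}"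
  proof (cases "card D")
    case 0
    then show ?thesis using that[of 0 1] \<open>finite D\<close> by simp
  next
    case (Suc k)
    show ?thesis
    proof (cases k)
      case 0
      then obtain x where "D = {x}" using Suc card_1_singletonE by (metis One_nat_def)
      then show ?thesis using that[of "x - 1" x] by simp
    next
      case (Suc k')
      then have "card D = 2" using \<open>card D \<le> 2\<close> \<open>card D = Suc k\<close> by simp
      then obtain x y where xy: "D = {x, y}" "x \<noteq> y" by (meson card_2_iff)
      then show ?thesis using that[of x y] that[of y x] by (cases "x < y") auto
    qed
  qed
  have "P = weyl_component p1 P + weyl_component p2 P"
  proof (rule poly_eqI, rule poly_eqI)
    fix j i
    have "coeff (coeff P j) i \<noteq> 0 \<Longrightarrow> int i - int j \<in> {p1, p2}"
      using p(2) unfolding D_def by blast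
    then show "coeff (coeff P j) i = coeff (coeff (weyl_component p1 P + weyl_component p2 P) j) i"
      using p(1) by (auto simp: coeff_weyl_component)
  qed
  then show ?thesis using that p(1) weyl_homog_component by blast
qed

section \<open>Homogeneous solutions and commuting homogeneous elements\<close>

lemma weyl_homog_degree_0:
  assumes "weyl_homog n u" "degree u = 0"
  shows "u = [:monom (coeff (coeff u 0) (nat n)) (nat n):]"
proof -
  have "coeff u 0 = (if 0 \<le> n then monom (coeff (coeff u 0) (nat n)) (nat n) else 0)"
    using weyl_homog_coeff[OF assms(1), of 0] by (simp split: if_splits)
  moreover have "u = [:coeff u 0:]" using assms(2) by (metis degree_0_id)
  ultimately show ?thesis by (metis coeff_monom monom_eq_0_iff)
qed

lemma weyl_homog_monom_Y:
  assumes "weyl_homog (- int k) v" "degree v = k"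
  shows "v = monom [:coeff (coeff v k) 0:] k"
proof (rule poly_eqI)
  fix j
  show "coeff v j = coeff (monom [:coeff (coeff v k) 0:] k) j"
  proof (cases j k rule: linorder_cases)
    case less
    then show ?thesis using weyl_homog_coeff[OF assms(1), of j] by (auto simp: coeff_monom)
  next
    case equal
    then show ?thesis using weyl_homog_coeff[OF assms(1), of k] by (simp add: monom_0)
  next
    case greater
    then show ?thesis using assms(2) by (simp add: coeff_eq_0 coeff_monom)
  qed
qed

lemma degree_xderiv_homog:
  assumes "weyl_homog m v" "v \<noteq> 0" "0 < m + int (degree v)"
  shows "degree (xderiv v) = degree v"
proof -
  define e where "e = nat (m + int (degree v))"
  have l: "lead_coeff v = monom (coeff (lead_coeff v) e) e" "coeff (lead_coeff v) e \<noteq> 0"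
    using weyl_homog_lead_coeff[OF assms(1,2)] unfolding e_def by auto
  have "e > 0" using assms(3) unfolding e_def by simp
  then have "pderiv (lead_coeff v) \<noteq> 0"
    by (subst l(1)) (use l(2) in \<open>simp add: pderiv_monom\<close>)
  then have "degree v \<le> degree (xderiv v)" by (simp add: le_degree)
  then show ?thesis using degree_xderiv_le[of v] by simp
qed

text \<open>Degree-0 elements act diagonally on the monomial basis of \<open>K[x]\<close>, hence commute.\<close>

lemma weyl_act_homog_0_monom:
  assumes "weyl_homog 0 u"
  obtains l where "weyl_act u (monom 1 k) = smult l (monom 1 k)"
proof -
  have "weyl_act u (monom 1 k) =
      (\<Sum>j\<le>degree u. monom (coeff (coeff u j) j * of_nat ((k choose j) * fact j)) k)"
    unfolding weyl_act_def
  proof (rule sum.cong[OF refl])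
    fix j
    have r: "coeff u j = monom (coeff (coeff u j) j) j"
      using weyl_homog_coeff[OF assms, of j] by simp
    show "coeff u j * (pderiv ^^ j) (monom 1 k) =
        monom (coeff (coeff u j) j * of_nat ((k choose j) * fact j)) k"
    proof (cases "j \<le> k")
      case True
      then show ?thesis
        by (subst r) (simp add: higher_pderiv_monom_binomial mult_monom of_nat_poly)
    next
      case False
      then show ?thesis by (simp add: higher_pderiv_monom_binomial binomial_eq_0)
    qed
  qed
  then show ?thesis by (intro that) (simp add: smult_monom monom_sum[symmetric])
qed

lemma weyl_comm_homog_0:
  assumes "weyl_homog 0 u" "weyl_homog 0 v"
  shows "weyl_comm u v = 0"
proof -
  have "weyl_act (weyl_comm u v) (monom 1 k) = 0" for k
  proof -
    obtain a where a: "weyl_act u (monom 1 k) = smult a (monom 1 k)"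
      using weyl_act_homog_0_monom[OF assms(1)] .
    obtain b where b: "weyl_act v (monom 1 k) = smult b (monom 1 k)"
      using weyl_act_homog_0_monom[OF assms(2)] .
    show ?thesis
      by (simp add: weyl_comm_def weyl_act_diff_left weyl_act_weyl_mult a b weyl_act_smult_right
          mult.commute)
  qed
  then have "weyl_act (weyl_comm u v) f = weyl_act 0 f" for f
    using poly_as_sum_of_monoms[of f]
    by (metis (no_types, lifting) smult_monom mult.right_neutral sum.neutral
        weyl_act_0_left weyl_act_smult_right weyl_act_sum_right smult_0_right)
  then show ?thesis by (rule weyl_act_inject)
qed

lemma weyl_comm_homog_eq_1_degree:
  assumes hu: "weyl_homog n u" and hv: "weyl_homog m v" and nm: "n + m = 0"
    and uv: "weyl_comm u v = 1"
  shows "degree u + degree v = 1" and "n \<noteq> 0"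
proof -
  have u0: "u \<noteq> 0" and v0: "v \<noteq> 0" using uv by auto
  show n0: "n \<noteq> 0"
  proof
    assume "n = 0"
    then have "weyl_comm u v = 0" using weyl_comm_homog_0 hu hv nm by simp
    then show False using uv by simp
  qed
  have "degree u + degree v \<noteq> 0"
  proof
    assume "degree u + degree v = 0"
    then show False
      using weyl_homog_degree_ge[OF hu u0] weyl_homog_degree_ge[OF hv v0] nm n0 by simp
  qed
  moreover have "int (degree u) * m \<noteq> int (degree v) * n"
  proof
    assume "int (degree u) * m = int (degree v) * n"
    then have "n * (int (degree u) + int (degree v)) = 0" using nm by algebra
    then show False using n0 \<open>degree u + degree v \<noteq> 0\<close> by simp
  qed
  from weyl_comm_homog_leading(2)[OF hu hv u0 v0 this]
  have "degree u + degree v - 1 = 0" using uv by simp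
  then show "degree u + degree v = 1" using \<open>degree u + degree v \<noteq> 0\<close> by linarith
qed

lemma weyl_comm_homog_eq_1_KX:
  assumes hu: "weyl_homog n u" and hv: "weyl_homog m v" and nm: "n + m = 0"
    and uv: "weyl_comm u v = 1" and du: "degree u = 0"
  shows "\<exists>c. c \<noteq> 0 \<and> u = [:[:0, c:]:] \<and> v = monom [:- inverse c:] 1"
proof -
  have u0: "u \<noteq> 0" and v0: "v \<noteq> 0" using uv by auto
  have dv: "degree v = 1" and n0: "n \<noteq> 0"
    using weyl_comm_homog_eq_1_degree[OF hu hv nm uv] du by auto
  have "0 \<le> n" using weyl_homog_degree_ge[OF hu u0] du by simp
  moreover have "0 \<le> m + 1" using weyl_homog_degree_ge[OF hv v0] dv by simp
  ultimately have n1: "n = 1" and m1: "m = - int 1" using nm n0 by auto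
  define c d where "c = coeff (coeff u 0) 1" and "d = coeff (coeff v 1) 0"
  have u: "u = [:[:0, c:]:]"
    using weyl_homog_degree_0[OF hu du] n1 unfolding c_def by (simp add: monom_Suc monom_0)
  have v: "v = monom [:d:] 1"
    using weyl_homog_monom_Y[OF hv[unfolded m1] dv] unfolding d_def by simp
  have "weyl_comm u v = - smult [:d:] (xderiv u)"
    unfolding v weyl_comm_swap[of u] weyl_comm_left_cY ..
  also have "\<dots> = [:[:- (d * c):]:]" unfolding u by (simp add: map_poly_pCons pderiv_pCons)
  finally have dc: "d * c = - 1" using uv by (metis one_pCons pCons_eq_iff minus_minus)
  then have c0: "c \<noteq> 0" by auto
  with dc have "d = - inverse c" by (simp add: field_simps)
  with u v c0 show ?thesis by blast
qed

lemma weyl_comm_homog_eq_1: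
  assumes hu: "weyl_homog n u" and hv: "weyl_homog m v" and nm: "n + m = 0"
    and uv: "weyl_comm u v = 1"
  obtains c where "c \<noteq> 0" "u = monom [:c:] 1" "v = [:[:0, inverse c:]:]"
    | c where "c \<noteq> 0" "u = [:[:0, c:]:]" "v = monom [:- inverse c:] 1"
proof -
  consider "degree u = 0" | "degree v = 0"
    using weyl_comm_homog_eq_1_degree(1)[OF assms] by linarith
  then show ?thesis
  proof cases
    case 1
    then show ?thesis using weyl_comm_homog_eq_1_KX[OF assms] that(2) by blast
  next
    case 2
    have "weyl_comm v (- u) = 1" using uv by (simp add: weyl_comm_uminus_right weyl_comm_swap[of v])
    then obtain c where "c \<noteq> 0" "v = [:[:0, c:]:]" "- u = monom [:- inverse c:] 1"
      using weyl_comm_homog_eq_1_KX[OF hv weyl_homog_uminus[OF hu]] nm 2 by (auto simp: add.commute)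
    then show ?thesis using that(1)[of "inverse c"] by (simp add: minus_monom minus_equation_iff[of u])
  qed
qed

lemma weyl_homog_const_Y: "weyl_homog (-1) (monom [:c:] 1)"
  unfolding weyl_homog_def by (auto simp: coeff_monom coeff_pCons split: nat.splits)

lemma weyl_comm_homog_eq_0_sign:
  assumes hu: "weyl_homog p u" and hv: "weyl_homog q v" and "u \<noteq> 0" "v \<noteq> 0"
    and uv: "weyl_comm u v = 0"
  shows "0 \<le> p * q"
proof (rule ccontr)
  assume "\<not> 0 \<le> p * q"
  then consider "0 < p" "q < 0" | "p < 0" "0 < q" by (auto simp: not_le mult_less_0_iff)
  moreover have det: "int (degree u) * q = int (degree v) * p"
    using weyl_comm_homog_eq_0_imp[OF assms] .
  moreover have "0 \<le> p + int (degree u)" "0 \<le> q + int (degree v)"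
    using weyl_homog_degree_ge assms by blast+
  ultimately show False
    by cases (smt (verit) mult_nonneg_nonpos mult_pos_pos mult_nonneg_nonneg mult_pos_neg
        of_nat_0_le_iff)+
qed

lemma weyl_homog_xderiv_eq_smult_pderiv:
  assumes hu: "weyl_homog p u" and hv: "weyl_homog q v" and uv: "weyl_comm u v = 0"
    and l: "l \<noteq> 0" and eq: "xderiv v = smult [:l:] (pderiv u)"
  shows "pderiv u = 0"
proof (rule ccontr)
  assume pu: "pderiv u \<noteq> 0"
  then have u0: "u \<noteq> 0" and xv: "xderiv v \<noteq> 0" using eq l by auto
  then have v0: "v \<noteq> 0" by auto
  define \<alpha> \<beta> where "\<alpha> = degree u" and "\<beta> = degree v"
  have \<alpha>1: "1 \<le> \<alpha>" using pu by (simp add: \<alpha>_def pderiv_eq_0_iff)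
  have dx: "degree (xderiv v) = \<alpha> - 1" using eq l by (simp add: degree_pderiv \<alpha>_def)
  have "q - 1 = p + 1"
    using weyl_homog_unique[OF weyl_homog_xderiv[OF hv] _ xv]
      weyl_homog_smult[OF weyl_homog_pderiv[OF hu]] eq
    by metis
  then have q: "q = p + 2" by simp
  have det: "int \<alpha> * q = int \<beta> * p"
    using weyl_comm_homog_eq_0_imp[OF hu hv u0 v0 uv] unfolding \<alpha>_def \<beta>_def .
  have p\<alpha>: "0 \<le> p + int \<alpha>" using weyl_homog_degree_ge[OF hu u0] unfolding \<alpha>_def .
  have q\<beta>: "0 \<le> q + int \<beta>" using weyl_homog_degree_ge[OF hv v0] unfolding \<beta>_def .
  show False
  proof (cases "q + int \<beta> = 0")
    case False
    then have "\<beta> = \<alpha> - 1"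
      using degree_xderiv_homog[OF hv v0] q\<beta> dx unfolding \<beta>_def by simp
    then have "int \<alpha> * (p + 2) = (int \<alpha> - 1) * p" using det q \<alpha>1 by (simp add: of_nat_diff)
    then show False using p\<alpha> \<alpha>1 by (simp add: algebra_simps)
  next
    case True
    then have "lead_coeff v = monom (coeff (lead_coeff v) 0) 0"
      using weyl_homog_lead_coeff(1)[OF hv v0] unfolding \<beta>_def by simp
    then have "coeff (xderiv v) \<beta> = 0" unfolding \<beta>_def by (metis coeff_xderiv monom_0 pderiv_singleton)
    then have "degree (xderiv v) \<noteq> \<beta>" using xv by (metis leading_coeff_0_iff)
    then have "\<alpha> \<le> \<beta>" using dx degree_xderiv_le[of v] \<alpha>1 unfolding \<beta>_def by simp
    moreover have "int \<beta> * int \<alpha> = int \<beta> * (int \<beta> + 2)"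
      using det q True by algebra
    moreover have "\<beta> \<noteq> 0" using \<open>\<alpha> \<le> \<beta>\<close> \<alpha>1 by simp
    ultimately show False by simp
  qed
qed

lemma weyl_homog_commuting_proportional:
  assumes hP: "weyl_homog a P" and hQ: "weyl_homog a Q" and a0: "a \<noteq> 0" and P0: "P \<noteq> 0"
    and dQ: "degree Q = degree P" and c: "weyl_comm P Q = 0"
  obtains l where "Q = smult [:l:] P"
proof -
  define e where "e = nat (a + int (degree P))"
  have lP: "lead_coeff P = monom (coeff (lead_coeff P) e) e" "coeff (lead_coeff P) e \<noteq> 0"
    using weyl_homog_lead_coeff[OF hP P0] unfolding e_def by auto
  have lQ: "lead_coeff Q = monom (coeff (lead_coeff Q) e) e" if "Q \<noteq> 0"
    using weyl_homog_lead_coeff[OF hQ that] dQ unfolding e_def by auto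
  define l where "l = coeff (lead_coeff Q) e / coeff (lead_coeff P) e"
  define R where "R = Q - smult [:l:] P"
  have top: "coeff R (degree P) = 0"
  proof (cases "Q = 0")
    case False
    have "coeff R (degree P) = lead_coeff Q - smult l (lead_coeff P)"
      unfolding R_def using dQ by simp
    also have "\<dots> = 0"
      using lP lQ[OF False] unfolding l_def by (metis smult_monom monom_eq_iff diff_self
          nonzero_divide_eq_eq)
    finally show ?thesis .
  qed (simp add: R_def l_def)
  have deg: "degree R \<le> degree P"
    unfolding R_def using dQ by (metis degree_diff_le degree_smult_le le_refl order_trans)
  have comm: "weyl_comm P R = 0"
    using c unfolding R_def by (simp add: weyl_comm_diff_right weyl_comm_smult_right)
  have "R = 0"
  proof (rule ccontr)
    assume "R \<noteq> 0"
    with top deg have "degree R < degree P"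
      by (metis leading_coeff_0_iff le_neq_implies_less)
    then have "int (degree P) * a \<noteq> int (degree R) * a" using a0 by simp
    moreover have "weyl_homog a R" unfolding R_def by (intro weyl_homog_diff hQ weyl_homog_smult hP)
    ultimately have "weyl_comm P R \<noteq> 0"
      using weyl_comm_homog_leading(1)[OF hP _ P0 \<open>R \<noteq> 0\<close>] by blast
    then show False using comm by simp
  qed
  then show ?thesis using that unfolding R_def by simp
qed

section \<open>Pairs of mass at most two\<close>

lemma smult_const_uminus: "smult [:- a:] y = - smult [:a::'a::comm_ring_1:] y"
  by (rule poly_eqI, rule poly_eqI) simp

lemma smult_const_add_eq_0_imp:
  fixes x y :: "'a::field poly poly"
  assumes "smult [:a:] x + smult [:b:] y = 0" "a \<noteq> 0"
  shows "x = smult [:- (b / a):] y"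
proof -
  have "smult [:inverse a:] (smult [:a:] x + smult [:b:] y) = 0" using assms(1) by simp
  then have "x + smult [:b / a:] y = 0"
    using assms(2) by (simp add: smult_add_right field_simps flip: one_pCons)
  then show ?thesis by (simp add: smult_const_uminus eq_neg_iff_add_eq_0[symmetric])
qed

lemma weyl_aut_pair_diagonal:
  assumes PQ: "weyl_comm (u1 + u2) (v1 + v2) = 1"
    and h1: "weyl_homog n u1" "weyl_homog m v1" "n + m = 0" and uv1: "weyl_comm u1 v1 = 1"
    and hu2: "weyl_homog p u2" and hv2: "weyl_homog q v2" and uv2: "weyl_comm u2 v2 = 0"
    and cross: "weyl_comm u1 v2 + weyl_comm u2 v1 = 0"
  shows "weyl_aut_pair (u1 + u2) (v1 + v2)"
proof (rule weyl_comm_homog_eq_1[OF h1 uv1])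
  fix c assume c: "c \<noteq> 0" and u1: "u1 = monom [:c:] 1" and v1: "v1 = [:[:0, inverse c:]:]"
  have "smult [:c:] (xderiv v2) + smult [:inverse c:] (pderiv u2) = 0"
    using cross unfolding u1 v1 weyl_comm_left_cY weyl_comm_right_cX .
  then have eq: "xderiv v2 = smult [:- (inverse c / c):] (pderiv u2)"
    using c by (rule smult_const_add_eq_0_imp)
  moreover have "pderiv u2 = 0"
    using weyl_homog_xderiv_eq_smult_pderiv[OF hu2 hv2 uv2 _ eq] c by simp
  ultimately have "xderiv v2 = 0" "u2 = [:coeff u2 0:]"
    by (simp_all add: pderiv_eq_0_iff degree_0_id)
  then show ?thesis
    using PQ c unfolding u1 v1 by (metis weyl_aut_pair_triangular)
next
  fix c assume c: "c \<noteq> 0" and u1: "u1 = [:[:0, c:]:]" and v1: "v1 = monom [:- inverse c:] 1"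
  have "smult [:inverse c:] (xderiv u2) + smult [:- c:] (pderiv v2) = 0"
    using cross unfolding u1 v1 weyl_comm_left_cX weyl_comm_right_cY
    by (simp add: smult_const_uminus add.commute)
  then have eq: "xderiv u2 = smult [:- (- c / inverse c):] (pderiv v2)"
    using c by (intro smult_const_add_eq_0_imp) simp_all
  moreover have "weyl_comm v2 u2 = 0" using uv2 by (simp add: weyl_comm_swap[of v2])
  then have "pderiv v2 = 0"
    using weyl_homog_xderiv_eq_smult_pderiv[OF hv2 hu2 _ _ eq] c by simp
  ultimately have "xderiv u2 = 0" "v2 = [:coeff v2 0:]"
    by (simp_all add: pderiv_eq_0_iff degree_0_id)
  then show ?thesis
    using PQ c unfolding u1 v1 by (metis weyl_aut_pair_triangular_X)
qed

lemma weyl_aut_pair_cross: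
  assumes PQ: "weyl_comm (u1 + u2) (v1 + v2) = 1"
    and h: "weyl_homog n u1" "weyl_homog m v2" "n + m = 0" and uv2: "weyl_comm u1 v2 = 1"
    and uv1: "weyl_comm u1 v1 = 0" and u2v: "weyl_comm u2 v2 = 0"
  shows "weyl_aut_pair (u1 + u2) (v1 + v2)"
proof (rule weyl_comm_homog_eq_1[OF h uv2])
  fix c assume c: "c \<noteq> 0" and u1: "u1 = monom [:c:] 1" and v2: "v2 = [:[:0, inverse c:]:]"
  have "xderiv v1 = 0" using uv1 c unfolding u1 weyl_comm_left_cY by simp
  moreover have "u2 = [:coeff u2 0:]"
    using u2v c unfolding v2 weyl_comm_right_cX by (simp add: pderiv_eq_0_iff degree_0_id)
  ultimately show ?thesis
    using PQ c unfolding u1 v2 by (metis weyl_aut_pair_triangular add.commute)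
next
  fix c assume c: "c \<noteq> 0" and u1: "u1 = [:[:0, c:]:]" and v2: "v2 = monom [:- inverse c:] 1"
  have "v1 = [:coeff v1 0:]"
    using uv1 c unfolding u1 weyl_comm_left_cX by (simp add: pderiv_eq_0_iff degree_0_id)
  moreover have "xderiv u2 = 0" using u2v c unfolding v2 weyl_comm_right_cY by simp
  ultimately show ?thesis
    using PQ c unfolding u1 v2 by (metis weyl_aut_pair_triangular_X add.commute)
qed

lemma degree_add_eq_max:
  assumes "degree p \<noteq> degree q"
  shows "degree (p + q) = max (degree p) (degree q)"
  using assms by (cases "degree p < degree q") (simp_all add: degree_add_eq_right degree_add_eq_left)

locale weyl_two_components =
  fixes P1 P2 Q1 Q2 :: "'a::field_char_0 poly poly" and p1 p2 q1 q2 :: int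
  assumes homog: "weyl_homog p1 P1" "weyl_homog p2 P2" "weyl_homog q1 Q1" "weyl_homog q2 Q2"
    and less: "p2 < p1" "q2 < q1"
    and comm: "weyl_comm (P1 + P2) (Q1 + Q2) = 1"
begin

lemma comm_component:
  "(if p1 + q1 = k then weyl_comm P1 Q1 else 0) + (if p1 + q2 = k then weyl_comm P1 Q2 else 0)
    + (if p2 + q1 = k then weyl_comm P2 Q1 else 0) + (if p2 + q2 = k then weyl_comm P2 Q2 else 0)
    = (if k = 0 then 1 else 0)"
proof -
  have comp: "weyl_component k (weyl_comm A B) = (if a + b = k then weyl_comm A B else 0)"
    if "weyl_homog a A" "weyl_homog b B" for a b A B
    using weyl_component_homog[OF weyl_homog_weyl_comm[OF that]] by auto
  have "?thesis \<longleftrightarrow> weyl_component k (weyl_comm P1 Q1) + weyl_component k (weyl_comm P1 Q2)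
      + weyl_component k (weyl_comm P2 Q1) + weyl_component k (weyl_comm P2 Q2)
      = (if k = 0 then 1 else 0)"
    using homog by (simp add: comp)
  also have "\<dots> \<longleftrightarrow> weyl_component k (weyl_comm (P1 + P2) (Q1 + Q2)) = weyl_component k 1"
    by (simp add: weyl_comm_add_left weyl_comm_add_right weyl_component_add ac_simps
        weyl_component_homog[OF weyl_homog_1])
  finally show ?thesis using comm by simp
qed

lemma comm_top: "weyl_comm P1 Q1 = (if p1 + q1 = 0 then 1 else 0)"
  using comm_component[of "p1 + q1"] less by auto

lemma comm_bottom: "weyl_comm P2 Q2 = (if p2 + q2 = 0 then 1 else 0)"
  using comm_component[of "p2 + q2"] less by auto

lemma comm_cross:
  assumes "p1 + q2 \<noteq> p2 + q1"
  shows "weyl_comm P1 Q2 = (if p1 + q2 = 0 then 1 else 0)"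
    and "weyl_comm P2 Q1 = (if p2 + q1 = 0 then 1 else 0)"
  using comm_component[of "p1 + q2"] comm_component[of "p2 + q1"] less assms by auto

lemma comm_cross_sum:
  assumes "p1 + q2 = p2 + q1"
  shows "weyl_comm P1 Q2 + weyl_comm P2 Q1 = (if p1 + q2 = 0 then 1 else 0)"
  using comm_component[of "p1 + q2"] less assms by auto

lemma comm_cross_sum_0:
  assumes "p1 + q2 \<noteq> 0" "p2 + q1 \<noteq> 0"
  shows "weyl_comm P1 Q2 + weyl_comm P2 Q1 = 0"
  using comm_cross comm_cross_sum assms by (cases "p1 + q2 = p2 + q1") auto

lemma degree_sum_eq_0: "p1 + q1 = 0 \<or> p1 + q2 = 0 \<or> p2 + q1 = 0 \<or> p2 + q2 = 0"
  using comm_component[of 0] by (auto split: if_splits)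

lemma top_case:
  assumes "p1 + q1 = 0"
  shows "weyl_aut_pair (P1 + P2) (Q1 + Q2)"
  using assms less
  by (intro weyl_aut_pair_diagonal[OF comm homog(1,3) assms _ homog(2,4)])
    (simp_all add: comm_top comm_bottom comm_cross_sum_0)

lemma bottom_case:
  assumes "p2 + q2 = 0"
  shows "weyl_aut_pair (P1 + P2) (Q1 + Q2)"
proof -
  have "weyl_aut_pair (P2 + P1) (Q2 + Q1)"
    using assms less comm
    by (intro weyl_aut_pair_diagonal[OF _ homog(2,4) assms _ homog(1,3)])
      (simp_all add: comm_top comm_bottom comm_cross_sum_0[simplified add.commute] add.commute)
  then show ?thesis by (simp add: add.commute)
qed

text \<open>In the balanced case \<open>p\<^sub>1 + q\<^sub>2 = p\<^sub>2 + q\<^sub>1 = 0\<close> with \<open>p\<^sub>2 < 0 < p\<^sub>1\<close>, comparing the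
  Y-degrees of \<open>[P\<^sub>1, Q\<^sub>2]\<close> and \<open>[P\<^sub>2, Q\<^sub>1]\<close>, which must cancel, forces \<open>Q\<^sub>i\<close> and \<open>P\<^sub>i\<close> to
  have the same degrees.\<close>

lemma balanced_degrees:
  assumes d12: "p1 + q2 = 0" and d21: "p2 + q1 = 0" and "p2 < 0" "0 < p1"
    and nz: "weyl_comm P1 Q2 \<noteq> 0" "weyl_comm P2 Q1 \<noteq> 0"
  shows "q1 = p1" "degree Q1 = degree P1" "degree Q2 = degree P2"
proof -
  have P0: "P1 \<noteq> 0" "P2 \<noteq> 0" and Q0: "Q1 \<noteq> 0" "Q2 \<noteq> 0" using nz by auto
  have s: "weyl_comm P1 Q2 + weyl_comm P2 Q1 = 1" using comm_cross_sum d12 d21 by simp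
  define \<alpha>1 \<alpha>2 \<beta>1 \<beta>2
    where "\<alpha>1 = degree P1" and "\<alpha>2 = degree P2" and "\<beta>1 = degree Q1" and "\<beta>2 = degree Q2"
  have det11: "int \<alpha>1 * q1 = int \<beta>1 * p1"
    using weyl_comm_homog_eq_0_imp[OF homog(1,3) P0(1) Q0(1)] comm_top d12 less
    unfolding \<alpha>1_def \<beta>1_def by simp
  have det22: "int \<alpha>2 * q2 = int \<beta>2 * p2"
    using weyl_comm_homog_eq_0_imp[OF homog(2,4) P0(2) Q0(2)] comm_bottom d12 less
    unfolding \<alpha>2_def \<beta>2_def by simp
  have g2: "0 \<le> p2 + int \<alpha>2" and g4: "0 \<le> q2 + int \<beta>2"
    using weyl_homog_degree_ge homog P0 Q0 unfolding \<alpha>2_def \<beta>2_def by blast+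
  have "int \<alpha>1 * q2 \<le> 0" using d12 \<open>0 < p1\<close> by (simp add: mult_nonneg_nonpos)
  moreover have "0 < int \<beta>2 * p1" using g4 d12 \<open>0 < p1\<close> by simp
  ultimately have "int \<alpha>1 * q2 \<noteq> int \<beta>2 * p1" by linarith
  then have X: "degree (weyl_comm P1 Q2) = \<alpha>1 + \<beta>2 - 1"
    using weyl_comm_homog_leading(2)[OF homog(1,4) P0(1) Q0(2)] unfolding \<alpha>1_def \<beta>2_def by simp
  have "int \<beta>1 * p2 \<le> 0" using \<open>p2 < 0\<close> by (simp add: mult_nonneg_nonpos)
  moreover have "0 < int \<alpha>2 * q1" using g2 d21 \<open>p2 < 0\<close> by simp
  ultimately have "int \<alpha>2 * q1 \<noteq> int \<beta>1 * p2" by linarith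
  then have Y: "degree (weyl_comm P2 Q1) = \<alpha>2 + \<beta>1 - 1"
    using weyl_comm_homog_leading(2)[OF homog(2,3) P0(2) Q0(1)] unfolding \<alpha>2_def \<beta>1_def by simp
  have "degree (weyl_comm P1 Q2) = degree (weyl_comm P2 Q1)"
  proof (rule ccontr)
    assume ne: "degree (weyl_comm P1 Q2) \<noteq> degree (weyl_comm P2 Q1)"
    then have "max (degree (weyl_comm P1 Q2)) (degree (weyl_comm P2 Q1)) = 0"
      using degree_add_eq_max[OF ne] s by simp
    then show False using ne by simp
  qed
  moreover have "1 \<le> \<beta>2" "1 \<le> \<alpha>2" using g2 g4 d12 \<open>p2 < 0\<close> \<open>0 < p1\<close> by linarith+
  ultimately have sum: "int \<alpha>1 + int \<beta>2 = int \<alpha>2 + int \<beta>1" using X Y by simp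
  have eq: "(p1 - q1) * (q1 * int \<alpha>1 + p1 * int \<alpha>2) = 0"
    using det11 det22 sum d12 d21 by algebra
  have "0 \<le> q1 * int \<alpha>1" using d21 \<open>p2 < 0\<close> by simp
  moreover have "0 < p1 * int \<alpha>2" using \<open>1 \<le> \<alpha>2\<close> \<open>0 < p1\<close> by simp
  ultimately have "q1 * int \<alpha>1 + p1 * int \<alpha>2 \<noteq> 0" by linarith
  with eq show "q1 = p1" by simp
  then show "degree Q1 = degree P1"
    using det11 \<open>0 < p1\<close> unfolding \<alpha>1_def \<beta>1_def by simp
  have "q2 = p2" using d12 d21 \<open>q1 = p1\<close> by simp
  then show "degree Q2 = degree P2"
    using det22 \<open>p2 < 0\<close> unfolding \<alpha>2_def \<beta>2_def by simp
qed

lemma balanced_straddle_case: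
  assumes d12: "p1 + q2 = 0" and d21: "p2 + q1 = 0" and "p2 < 0" "0 < p1"
    and nz: "weyl_comm P1 Q2 \<noteq> 0" "weyl_comm P2 Q1 \<noteq> 0"
  shows "weyl_aut_pair (P1 + P2) (Q1 + Q2)"
proof -
  note deg = balanced_degrees[OF assms]
  have P0: "P1 \<noteq> 0" "P2 \<noteq> 0" using nz by auto
  have c: "weyl_comm P1 Q1 = 0" "weyl_comm P2 Q2 = 0"
    using comm_top comm_bottom d12 less by simp_all
  have "q2 = p2" using deg(1) d12 d21 by simp
  then have h: "weyl_homog p1 Q1" "weyl_homog p2 Q2" using homog(3,4) deg(1) by simp_all
  have n0: "p1 \<noteq> 0" "p2 \<noteq> 0" using \<open>p2 < 0\<close> \<open>0 < p1\<close> by simp_all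
  obtain l where l: "Q1 = smult [:l:] P1"
    using weyl_homog_commuting_proportional[OF homog(1) h(1) n0(1) P0(1) deg(2) c(1)] .
  obtain m where m: "Q2 = smult [:m:] P2"
    using weyl_homog_commuting_proportional[OF homog(2) h(2) n0(2) P0(2) deg(3) c(2)] .
  have "weyl_comm P1 Q2 + weyl_comm P2 Q1 = 1" using comm_cross_sum d12 d21 by simp
  then have PQ2: "weyl_comm P1 (smult [:m - l:] P2) = 1"
    unfolding l m weyl_comm_smult_right weyl_comm_swap[of P2 P1]
    by (simp add: smult_const_uminus smult_add_left[symmetric] flip: smult_diff_left)
  show ?thesis
  proof (rule weyl_comm_homog_eq_1[OF homog(1) weyl_homog_smult[OF homog(2)] _ PQ2])
    show "p1 + p2 = 0" using d12 d21 deg(1) by simp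
  next
    fix c assume "P1 = monom [:c:] 1"
    then have "weyl_homog (-1) P1" using weyl_homog_const_Y by simp
    then have "p1 = -1" using weyl_homog_unique[OF homog(1)] P0(1) by blast
    then show ?thesis using \<open>0 < p1\<close> by simp
  next
    fix c assume c: "c \<noteq> 0" and P1: "P1 = [:[:0, c:]:]"
      and P2: "smult [:m - l:] P2 = monom [:- inverse c:] 1"
    have ml: "m - l \<noteq> 0" using P2 c by auto
    define e where "e = - inverse c / (m - l)"
    have "P2 = smult [:inverse (m - l):] (smult [:m - l:] P2)" using ml by (simp flip: one_pCons)
    then have P2e: "P2 = monom [:e:] 1" unfolding P2 e_def by (simp add: smult_monom field_simps)
    have e0: "e \<noteq> 0" using c ml unfolding e_def by simp
    show ?thesis
    proof (rule weyl_aut_pair_linear[OF comm])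
      have "c * (e * m) - c * l * e = c * e * (m - l)" by (simp add: algebra_simps)
      then show "c * (e * m) - c * l * e \<noteq> 0" using c e0 ml by simp
      show "P1 + P2 = [:[:0, c:]:] + monom [:e:] 1" using P1 P2e by simp
      show "Q1 + Q2 = [:[:0, c * l:]:] + monom [:e * m:] 1"
        unfolding l m P1 P2e by (simp add: smult_monom mult.commute)
    qed
  qed
qed

lemma cross_case_12:
  assumes "p1 + q2 = 0" "weyl_comm P1 Q2 = 1" "weyl_comm P1 Q1 = 0" "weyl_comm P2 Q2 = 0"
  shows "weyl_aut_pair (P1 + P2) (Q1 + Q2)"
  using weyl_aut_pair_cross[OF comm homog(1,4) assms] .

lemma cross_case_21:
  assumes "p2 + q1 = 0" "weyl_comm P2 Q1 = 1" "weyl_comm P2 Q2 = 0" "weyl_comm P1 Q1 = 0"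
  shows "weyl_aut_pair (P1 + P2) (Q1 + Q2)"
  using weyl_aut_pair_cross[of P2 P1 Q2 Q1, OF _ homog(2,3) assms] comm by (simp add: add.commute)

lemma balanced_case:
  assumes d: "p1 + q2 = 0" "p2 + q1 = 0"
  shows "weyl_aut_pair (P1 + P2) (Q1 + Q2)"
proof -
  have c11: "weyl_comm P1 Q1 = 0" and c22: "weyl_comm P2 Q2 = 0"
    using comm_top comm_bottom d less by simp_all
  have s: "weyl_comm P1 Q2 + weyl_comm P2 Q1 = 1" using comm_cross_sum d by simp
  consider "weyl_comm P2 Q1 = 0" | "weyl_comm P1 Q2 = 0"
    | "weyl_comm P1 Q2 \<noteq> 0" "weyl_comm P2 Q1 \<noteq> 0" by blast
  then show ?thesis
  proof cases
    case 1
    then show ?thesis using cross_case_12 d s c11 c22 by simp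
  next
    case 2
    then show ?thesis using cross_case_21 d s c11 c22 by simp
  next
    case nz: 3
    have P0: "P1 \<noteq> 0" "P2 \<noteq> 0" and Q0: "Q1 \<noteq> 0" "Q2 \<noteq> 0" using nz by auto
    have "0 \<le> p1 * q1" "0 \<le> p2 * q2"
      using weyl_comm_homog_eq_0_sign homog P0 Q0 c11 c22 by blast+
    moreover have "q1 = - p2" "q2 = - p1" using d by simp_all
    ultimately have "p1 * p2 \<le> 0" by simp
    show ?thesis
    proof (cases "p2 < 0 \<and> 0 < p1")
      case True
      then show ?thesis using balanced_straddle_case[OF d] nz by blast
    next
      case False
      then have "p1 = 0 \<or> p2 = 0"
        using \<open>p1 * p2 \<le> 0\<close> less by (auto simp: mult_le_0_iff)
      then have "weyl_comm P1 Q2 = 0 \<or> weyl_comm P2 Q1 = 0"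
        using homog d by (auto simp: weyl_comm_homog_0)
      then show ?thesis using nz by blast
    qed
  qed
qed

lemma weyl_aut_pair_components: "weyl_aut_pair (P1 + P2) (Q1 + Q2)"
proof -
  consider "p1 + q1 = 0" | "p2 + q2 = 0" | "p1 + q1 \<noteq> 0" "p2 + q2 \<noteq> 0" by blast
  then show ?thesis
  proof cases
    case 1
    then show ?thesis by (rule top_case)
  next
    case 2
    then show ?thesis by (rule bottom_case)
  next
    case 3
    then have "weyl_comm P1 Q1 = 0" "weyl_comm P2 Q2 = 0"
      using comm_top comm_bottom by simp_all
    show ?thesis
    proof (cases "p1 + q2 = p2 + q1")
      case False
      then show ?thesis
        using comm_cross[OF False] degree_sum_eq_0 3 cross_case_12 cross_case_21
          \<open>weyl_comm P1 Q1 = 0\<close> \<open>weyl_comm P2 Q2 = 0\<close> by auto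
    next
      case True
      then show ?thesis using degree_sum_eq_0 3 balanced_case by auto
    qed
  qed
qed

end

theorem theorem1p1:
  fixes P Q :: "'a::field_char_0 poly poly"
  assumes "weyl_mass P \<le> 2" and "weyl_mass Q \<le> 2"
    and "weyl_mult P Q - weyl_mult Q P = 1"
  shows "\<exists>\<tau>. weyl_aut \<tau> \<and> P = \<tau> weyl_Y \<and> Q = \<tau> weyl_X"
proof -
  obtain p1 p2 P1 P2 where P: "p2 < p1" "weyl_homog p1 P1" "weyl_homog p2 P2" "P = P1 + P2"
    using weyl_mass_le_2_decomp[OF assms(1)] .
  obtain q1 q2 Q1 Q2 where Q: "q2 < q1" "weyl_homog q1 Q1" "weyl_homog q2 Q2" "Q = Q1 + Q2"
    using weyl_mass_le_2_decomp[OF assms(2)] .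
  have "weyl_comm (P1 + P2) (Q1 + Q2) = 1"
    using assms(3) P(4) Q(4) by (simp add: weyl_comm_def)
  then interpret weyl_two_components P1 P2 Q1 Q2 p1 p2 q1 q2
    using P Q by unfold_locales
  show ?thesis using weyl_aut_pair_components P(4) Q(4) unfolding weyl_aut_pair_def by simp
qed

end
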